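(* Let $\alpha\in(0,1)$ and suppose $|\mathrm{CVaR}_\alpha(F^{(i)})|<\infty$ for all $i\in\mathbb K$. Then, with respect to the norm $\|F\|=\max\{\|F\|_\infty,|\int_{-\infty}^0x\,dF(x)|\}$, $\mathrm{CVaR}_\alpha$ is a stable EDPM; that is, (1) $\mathrm{CVaR}_\alpha$ is continuous at every $F\in\mathcal D^\Delta$ with respect to $\|\cdot\|$, and (2) $\lim_{t\to\infty}\|\hat F^{(i)}_t-F^{(i)}\|=0$ almost surely for every $i\in\mathbb K$.
   Context: Let $K\ge1$, $\mathbb K=\{1,\dots,K\}$; arm $i$ produces i.i.d. rewards $X^{(i)}_1,X^{(i)}_2,\dots$ with distribution function $F^{(i)}$, and $\hat F^{(i)}_t(y)=\frac1t\sum_{s\le t}\mathbf 1\{X^{(i)}_s\le y\}$. $\Delta_{K-1}$ is the probability simplex in $\mathbb R^K$, $\mathcal D^\Delta=\{\sum_ip_iF^{(i)}:p\in\Delta_{K-1}\}$. $\|F\|_\infty=\sup_x|F(x)|$; the norm above is considered on the space of bounded functions on $\mathbb R$ for which it is finite (integrals in the Lebesgue–Stieltjes sense). For such $F$, $\mathrm{VaR}_\alpha(F)=\inf\{y\in\mathbb R:F(y)\ge\alpha\}$ and $\mathrm{CVaR}_\alpha(F)=\mathrm{VaR}_\alpha(F)-\frac1\alpha\int_{-\infty}^{\mathrm{VaR}_\alpha(F)}F(y)\,dy$. *)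

theory Defs
  imports "HOL-Probability.Probability"
begin

definition distribution_function :: "(real \<Rightarrow> real) \<Rightarrow> bool" where
  "distribution_function F \<longleftrightarrow> mono F \<and> (\<forall>x. continuous (at_right x) F)
     \<and> (F \<longlongrightarrow> 0) at_bot \<and> (F \<longlongrightarrow> 1) at_top"

definition VaR :: "real \<Rightarrow> (real \<Rightarrow> real) \<Rightarrow> real" where
  "VaR \<alpha> F = Inf {y. F y \<ge> \<alpha>}"

text \<open>Conditional value at risk, with values in the extended reals
  (the Lebesgue integral of the nonnegative function F over (-inf, VaR] may be infinite).\<close>
definition CVaR :: "real \<Rightarrow> (real \<Rightarrow> real) \<Rightarrow> ereal" where
  "CVaR \<alpha> F = ereal (VaR \<alpha> F)
     - ereal (1 / \<alpha>) * enn2ereal (\<integral>\<^sup>+ y. indicator {..VaR \<alpha> F} y * ennreal (F y) \<partial>lborel)"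

definition LS_neg_finite :: "(real \<Rightarrow> real) \<Rightarrow> bool" where
  "LS_neg_finite F \<longleftrightarrow> set_integrable (interval_measure F) {..0} (\<lambda>x. x)"

definition LS_neg_int :: "(real \<Rightarrow> real) \<Rightarrow> real" where
  "LS_neg_int F = (LINT x:{..0}|interval_measure F. x)"

text \<open>The norm ||G - F|| = max { ||G - F||_inf , |int_{-inf}^0 x d(G - F)(x)| } for
  distribution functions G, F (with finite integrals), using linearity of the
  Lebesgue--Stieltjes integral.\<close>
definition sup_norm :: "(real \<Rightarrow> real) \<Rightarrow> real" where
  "sup_norm H = (SUP x. \<bar>H x\<bar>)"

definition cvar_norm_dist :: "(real \<Rightarrow> real) \<Rightarrow> (real \<Rightarrow> real) \<Rightarrow> real" where
  "cvar_norm_dist G F = max (sup_norm (\<lambda>x. G x - F x)) \<bar>LS_neg_int G - LS_neg_int F\<bar>"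

definition mixtures :: "nat \<Rightarrow> (nat \<Rightarrow> real \<Rightarrow> real) \<Rightarrow> (real \<Rightarrow> real) set" where
  "mixtures K F = {(\<lambda>x. \<Sum>i\<in>{1..K}. p i * F i x) | p.
      (\<forall>i\<in>{1..K}. p i \<ge> 0) \<and> (\<Sum>i\<in>{1..K}. p i) = 1}"

definition empirical_cdf :: "(nat \<Rightarrow> real) \<Rightarrow> nat \<Rightarrow> real \<Rightarrow> real" where
  "empirical_cdf Xs t y = (1 / real t) * (\<Sum>s\<in>{1..t}. if Xs s \<le> y then 1 else 0)"

end

theory Submission
  imports Defs
begin

(* Writing J_G(c) for the integral of G over (-inf, c], one has
   CVaR_a(G) = VaR_a(G) - J_G(VaR_a(G)) / a = max_c (c - J_G(c) / a)  (Rockafellar--Uryasev).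
   Comparing the two maximisers gives |CVaR_a(G) - CVaR_a(H)| <= max_c |J_G(c) - J_H(c)| / a
   over c in {VaR_a(G), VaR_a(H)}, and |J_G(c) - J_H(c)| <= |J_G(0) - J_H(0)| + |c| ||G - H||_inf.
   By Tonelli, -J_G(0) is the integral of x over (-inf, 0] against dG, so both terms are controlled
   by the norm, and VaR_a(G) stays bounded for G close to G0 in sup norm: this is continuity.
   For stability, the Glivenko--Cantelli theorem gives the sup-norm part and the strong law of large
   numbers, applied to the negative parts of the samples, gives the integral part.  Both rest on
   Etemadi's strong law for pairwise independent, identically distributed, nonnegative variables:
   truncate the i-th variable at level i + 1, control the truncated sums along the geometric
   subsequences floor(b^n) by Chebyshev's inequality and Borel--Cantelli, and interpolate between
   consecutive terms using the monotonicity of the partial sums. *)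

section \<open>Distribution functions and the integrated distribution function\<close>

lemma distribution_function_mono: "distribution_function G \<Longrightarrow> x \<le> y \<Longrightarrow> G x \<le> G y"
  unfolding distribution_function_def mono_def by blast

lemma distribution_function_nonneg: "distribution_function G \<Longrightarrow> 0 \<le> G x"
  unfolding distribution_function_def
  by (metis (mono_tags) eventually_at_bot_linorder monoD tendsto_upperbound
      trivial_limit_at_bot_linorder)

lemma distribution_function_le_1: "distribution_function G \<Longrightarrow> G x \<le> 1"
  unfolding distribution_function_def
  by (metis (mono_tags) eventually_at_top_linorder monoD tendsto_lowerbound
      trivial_limit_at_top_linorder)

lemma borel_measurable_distribution_function:
  "distribution_function G \<Longrightarrow> G \<in> borel_measurable borel"
  by (rule borel_measurable_mono) (simp add: distribution_function_def)

lemma real_distribution_interval_measure_df: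
  "distribution_function G \<Longrightarrow> real_distribution (interval_measure G)"
  unfolding distribution_function_def mono_def by (intro real_distribution_interval_measure) auto

lemma emeasure_interval_measure_atMost_df:
  "distribution_function G \<Longrightarrow> emeasure (interval_measure G) {..x} = G x"
  unfolding distribution_function_def mono_def by (intro emeasure_interval_measure_Iic) auto

lemma cdf_interval_measure_df: "distribution_function G \<Longrightarrow> cdf (interval_measure G) = G"
  unfolding distribution_function_def mono_def by (intro cdf_interval_measure) auto

lemma distribution_function_cdf:
  assumes "real_distribution \<mu>" shows "distribution_function (cdf \<mu>)"
proof -
  interpret real_distribution \<mu> by (rule assms)
  show ?thesis unfolding distribution_function_def mono_def
    using cdf_nondecreasing cdf_is_right_cont cdf_lim_at_bot cdf_lim_at_top_prob by blast
qed

definition integrated_cdf :: "(real \<Rightarrow> real) \<Rightarrow> real \<Rightarrow> real" where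
  "integrated_cdf G c = (\<integral>y. indicator {..c} y * G y \<partial>lborel)"

lemma nn_integral_neg_part_interval_measure:
  assumes G: "distribution_function G"
  shows "(\<integral>\<^sup>+x. ennreal (- x) * indicator {..0} x \<partial>interval_measure G)
       = (\<integral>\<^sup>+y. indicator {..0} y * ennreal (G y) \<partial>lborel)"
proof -
  let ?\<mu> = "interval_measure G"
  interpret real_distribution ?\<mu> using real_distribution_interval_measure_df[OF G] .
  interpret pair_sigma_finite ?\<mu> lborel by unfold_locales
  have inner_lborel: "ennreal (- x) * indicator {..0} x = (\<integral>\<^sup>+y. indicator {x..0} y \<partial>lborel)"
    for x :: real
    by (cases "x \<le> 0") (auto simp: nn_integral_indicator emeasure_lborel_Icc_eq)
  have inner_\<mu>: "(\<integral>\<^sup>+x. indicator {x..0} y \<partial>?\<mu>) = indicator {..0} y * ennreal (G y)" for y :: real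
  proof -
    have "(\<lambda>x. indicator {x..0} y :: ennreal) = (\<lambda>x. indicator {..0} y * indicator {..y} x)"
      by (auto simp: indicator_def fun_eq_iff)
    then show ?thesis
      using emeasure_interval_measure_atMost_df[OF G, of y]
      by (simp add: nn_integral_cmult_indicator)
  qed
  have "(\<lambda>(x, y). indicator {x..0} y :: ennreal)
      = (\<lambda>p::real \<times> real. if fst p \<le> snd p \<and> snd p \<le> 0 then 1 else 0)"
    by (auto simp: indicator_def fun_eq_iff)
  then have "(\<lambda>(x, y). indicator {x..0} y :: ennreal) \<in> borel_measurable (?\<mu> \<Otimes>\<^sub>M lborel)"
    by simp
  from Fubini'[OF this] show ?thesis
    unfolding inner_lborel by (simp add: inner_\<mu>)
qed

lemma integrable_integrated_cdf_iff_nn_integral: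
  assumes G: "distribution_function G"
  shows "integrable lborel (\<lambda>y. indicator {..c} y * G y)
     \<longleftrightarrow> (\<integral>\<^sup>+y. indicator {..c} y * ennreal (G y) \<partial>lborel) < \<infinity>"
proof -
  have "(\<integral>\<^sup>+y. ennreal (norm (indicator {..c} y * G y)) \<partial>lborel)
      = (\<integral>\<^sup>+y. indicator {..c} y * ennreal (G y) \<partial>lborel)"
    using distribution_function_nonneg[OF G] by (intro nn_integral_cong) (auto simp: indicator_def)
  then show ?thesis
    using borel_measurable_distribution_function[OF G] by (subst integrable_iff_bounded) auto
qed

lemma integrable_integrated_cdf_shift:
  assumes G: "distribution_function G" and int: "integrable lborel (\<lambda>y. indicator {..a} y * G y)"
  shows "integrable lborel (\<lambda>y. indicator {..b} y * G y)"
proof (rule Bochner_Integration.integrable_bound)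
  show "integrable lborel (\<lambda>y. indicator {..a} y * G y + indicator {a..b} y)"
    using int by (intro Bochner_Integration.integrable_add integrable_real_indicator)
      (auto simp: emeasure_lborel_Icc_eq)
  show "AE y in lborel. norm (indicator {..b} y * G y)
      \<le> norm (indicator {..a} y * G y + indicator {a..b} y)"
    using distribution_function_nonneg[OF G] distribution_function_le_1[OF G]
    by (intro AE_I2) (auto simp: indicator_def)
qed (use borel_measurable_distribution_function[OF G] in measurable)

lemma LS_neg_finite_iff_integrable:
  assumes G: "distribution_function G"
  shows "LS_neg_finite G \<longleftrightarrow> integrable lborel (\<lambda>y. indicator {..0} y * G y)"
proof -
  have "LS_neg_finite G
      \<longleftrightarrow> (\<integral>\<^sup>+x. ennreal (norm (indicator {..0} x *\<^sub>R x)) \<partial>interval_measure G) < \<infinity>"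
    unfolding LS_neg_finite_def set_integrable_def by (subst integrable_iff_bounded) auto
  also have "(\<integral>\<^sup>+x. ennreal (norm (indicator {..0} x *\<^sub>R x)) \<partial>interval_measure G)
      = (\<integral>\<^sup>+x. ennreal (- x) * indicator {..0} x \<partial>interval_measure G)"
    by (intro nn_integral_cong) (auto simp: indicator_def)
  finally show ?thesis
    by (simp add: nn_integral_neg_part_interval_measure[OF G]
        integrable_integrated_cdf_iff_nn_integral[OF G])
qed

lemma integrable_integrated_cdf:
  "distribution_function G \<Longrightarrow> LS_neg_finite G \<Longrightarrow> integrable lborel (\<lambda>y. indicator {..c} y * G y)"
  by (rule integrable_integrated_cdf_shift) (auto simp: LS_neg_finite_iff_integrable)

lemma nn_integral_eq_integrated_cdf:
  assumes G: "distribution_function G" "LS_neg_finite G"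
  shows "(\<integral>\<^sup>+y. indicator {..c} y * ennreal (G y) \<partial>lborel) = ennreal (integrated_cdf G c)"
proof -
  have "(\<integral>\<^sup>+y. indicator {..c} y * ennreal (G y) \<partial>lborel)
      = (\<integral>\<^sup>+y. ennreal (indicator {..c} y * G y) \<partial>lborel)"
    by (intro nn_integral_cong) (auto simp: indicator_def)
  also have "\<dots> = ennreal (integrated_cdf G c)"
    unfolding integrated_cdf_def using distribution_function_nonneg[OF G(1)]
    by (intro nn_integral_eq_integral integrable_integrated_cdf[OF G]) auto
  finally show ?thesis .
qed

lemma integrated_cdf_nonneg: "distribution_function G \<Longrightarrow> 0 \<le> integrated_cdf G c"
  unfolding integrated_cdf_def
  by (intro integral_nonneg_AE) (auto simp: distribution_function_nonneg)

lemma LS_neg_int_eq_integrated_cdf: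
  assumes G: "distribution_function G" "LS_neg_finite G"
  shows "LS_neg_int G = - integrated_cdf G 0"
proof -
  have "LS_neg_int G = - (\<integral>x. indicator {..0} x * (- x) \<partial>interval_measure G)"
    unfolding LS_neg_int_def set_lebesgue_integral_def by simp
  also have "(\<integral>x. indicator {..0} x * (- x) \<partial>interval_measure G)
     = enn2real (\<integral>\<^sup>+x. ennreal (- x) * indicator {..0} x \<partial>interval_measure G)"
    by (subst integral_eq_nn_integral)
      (auto simp: indicator_def intro!: arg_cong[where f=enn2real] nn_integral_cong)
  also have "\<dots> = integrated_cdf G 0"
    using integrated_cdf_nonneg[OF G(1)]
    by (simp add: nn_integral_neg_part_interval_measure[OF G(1)]
        nn_integral_eq_integrated_cdf[OF G])
  finally show ?thesis .
qed

lemma CVaR_eq_integrated_cdf: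
  "distribution_function G \<Longrightarrow> LS_neg_finite G
    \<Longrightarrow> CVaR \<alpha> G = ereal (VaR \<alpha> G - integrated_cdf G (VaR \<alpha> G) / \<alpha>)"
  unfolding CVaR_def by (simp add: nn_integral_eq_integrated_cdf integrated_cdf_nonneg)

lemma LS_neg_finite_if_CVaR_finite:
  assumes G: "distribution_function G" and "0 < \<alpha>" and fin: "\<bar>CVaR \<alpha> G\<bar> < \<infinity>"
  shows "LS_neg_finite G"
proof -
  have "(\<integral>\<^sup>+y. indicator {..VaR \<alpha> G} y * ennreal (G y) \<partial>lborel) \<noteq> \<infinity>"
    using fin \<open>0 < \<alpha>\<close> by (intro notI) (simp add: CVaR_def)
  then have "integrable lborel (\<lambda>y. indicator {..VaR \<alpha> G} y * G y)"
    by (simp add: integrable_integrated_cdf_iff_nn_integral[OF G] less_top)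
  then show ?thesis
    by (simp add: LS_neg_finite_iff_integrable[OF G] integrable_integrated_cdf_shift[OF G])
qed

lemma distribution_function_mixture:
  assumes F: "\<And>i. i \<in> I \<Longrightarrow> distribution_function (F i)"
    and p: "\<And>i. i \<in> I \<Longrightarrow> 0 \<le> p i" "(\<Sum>i\<in>I. p i) = 1"
  shows "distribution_function (\<lambda>x. \<Sum>i\<in>I. p i * F i x)"
  unfolding distribution_function_def
proof (intro conjI allI)
  show "mono (\<lambda>x. \<Sum>i\<in>I. p i * F i x)"
    using F p(1) by (intro monoI sum_mono mult_left_mono) (auto intro: distribution_function_mono)
  show "continuous (at_right x) (\<lambda>x. \<Sum>i\<in>I. p i * F i x)" for x
    using F unfolding distribution_function_def by (intro continuous_intros) auto
  have "((\<lambda>x. \<Sum>i\<in>I. p i * F i x) \<longlongrightarrow> (\<Sum>i\<in>I. p i * 0)) at_bot"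
    using F unfolding distribution_function_def by (intro tendsto_intros) auto
  then show "((\<lambda>x. \<Sum>i\<in>I. p i * F i x) \<longlongrightarrow> 0) at_bot" by simp
  have "((\<lambda>x. \<Sum>i\<in>I. p i * F i x) \<longlongrightarrow> (\<Sum>i\<in>I. p i * 1)) at_top"
    using F unfolding distribution_function_def by (intro tendsto_intros) auto
  then show "((\<lambda>x. \<Sum>i\<in>I. p i * F i x) \<longlongrightarrow> 1) at_top" using p(2) by simp
qed

lemma LS_neg_finite_mixture:
  assumes F: "\<And>i. i \<in> I \<Longrightarrow> distribution_function (F i)" "\<And>i. i \<in> I \<Longrightarrow> LS_neg_finite (F i)"
    and p: "\<And>i. i \<in> I \<Longrightarrow> 0 \<le> p i" "(\<Sum>i\<in>I. p i) = 1"
  shows "LS_neg_finite (\<lambda>x. \<Sum>i\<in>I. p i * F i x)"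
proof -
  have "integrable lborel (\<lambda>y. \<Sum>i\<in>I. p i * (indicator {..0} y * F i y))"
    using F by (intro Bochner_Integration.integrable_sum Bochner_Integration.integrable_mult_right
        integrable_integrated_cdf)
  then show ?thesis
    by (simp add: LS_neg_finite_iff_integrable[OF distribution_function_mixture[OF F(1) p]]
        sum_distrib_left mult.left_commute)
qed

section \<open>Continuity of CVaR\<close>

context
  fixes G :: "real \<Rightarrow> real" and \<alpha> :: real
  assumes G: "distribution_function G" and \<alpha>: "0 < \<alpha>" "\<alpha> < 1"
begin

lemma VaR_set_nonempty: "{y. \<alpha> \<le> G y} \<noteq> {}"
proof -
  have "\<forall>\<^sub>F y in at_top. \<alpha> < G y"
    using G \<alpha> unfolding distribution_function_def by (auto intro: order_tendstoD)
  then show ?thesis by (auto simp: eventually_at_top_linorder intro: less_imp_le)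
qed

lemma VaR_set_bdd_below: "bdd_below {y. \<alpha> \<le> G y}"
proof -
  have "\<forall>\<^sub>F y in at_bot. G y < \<alpha>"
    using G \<alpha> unfolding distribution_function_def by (auto intro: order_tendstoD)
  then obtain a where "\<And>y. y \<le> a \<Longrightarrow> G y < \<alpha>" by (auto simp: eventually_at_bot_linorder)
  then show ?thesis by (intro bdd_belowI[of _ a]) (metis mem_Collect_eq nle_le not_less)
qed

lemma VaR_le: "\<alpha> \<le> G y \<Longrightarrow> VaR \<alpha> G \<le> y"
  unfolding VaR_def by (rule cInf_lower) (use VaR_set_bdd_below in auto)

lemma le_VaR: "G a < \<alpha> \<Longrightarrow> a \<le> VaR \<alpha> G"
  unfolding VaR_def
proof (rule cInf_greatest[OF VaR_set_nonempty])
  fix y assume "G a < \<alpha>" "y \<in> {y. \<alpha> \<le> G y}"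
  then show "a \<le> y" using distribution_function_mono[OF G, of y a] by (cases "y < a") auto
qed

lemma df_less_if_less_VaR: "y < VaR \<alpha> G \<Longrightarrow> G y < \<alpha>"
  using VaR_le[of y] by linarith

lemma le_df_at_VaR: "\<alpha> \<le> G (VaR \<alpha> G)"
proof -
  let ?v = "VaR \<alpha> G"
  have lim: "(G \<longlongrightarrow> G ?v) (at_right ?v)"
    using G unfolding distribution_function_def by (simp add: continuous_within)
  have "\<forall>\<^sub>F y in at_right ?v. \<alpha> \<le> G y"
  proof (rule eventually_at_rightI[of ?v "?v + 1"])
    fix y assume "y \<in> {?v<..<?v + 1}"
    then obtain z where "\<alpha> \<le> G z" "z < y"
      unfolding VaR_def using cInf_less_iff[OF VaR_set_nonempty VaR_set_bdd_below] by auto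
    then show "\<alpha> \<le> G y" using distribution_function_mono[OF G, of z y] by simp
  qed simp
  then show ?thesis by (rule tendsto_lowerbound[OF lim]) simp
qed

end

lemma VaR_bounded_near:
  assumes G0: "distribution_function G0" and \<alpha>: "0 < \<alpha>" "\<alpha> < 1"
  obtains R where "\<And>G. distribution_function G
      \<Longrightarrow> (\<And>y. \<bar>G y - G0 y\<bar> < min (\<alpha> / 2) ((1 - \<alpha>) / 2)) \<Longrightarrow> \<bar>VaR \<alpha> G\<bar> \<le> R"
proof -
  have lim: "(G0 \<longlongrightarrow> 0) at_bot" "(G0 \<longlongrightarrow> 1) at_top"
    using G0 unfolding distribution_function_def by auto
  have "\<forall>\<^sub>F y in at_bot. G0 y < \<alpha> / 2" "\<forall>\<^sub>F y in at_top. (1 + \<alpha>) / 2 < G0 y"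
    using order_tendstoD(2)[OF lim(1), of "\<alpha> / 2"] order_tendstoD(1)[OF lim(2), of "(1 + \<alpha>) / 2"] \<alpha>
    by auto
  then obtain a b where a: "G0 a < \<alpha> / 2" and b: "(1 + \<alpha>) / 2 < G0 b"
    by (auto simp: eventually_at_bot_linorder eventually_at_top_linorder)
  show ?thesis
  proof (rule that[of "\<bar>a\<bar> + \<bar>b\<bar>"])
    fix G assume G: "distribution_function G"
      and close: "\<And>y. \<bar>G y - G0 y\<bar> < min (\<alpha> / 2) ((1 - \<alpha>) / 2)"
    have "\<bar>G a - G0 a\<bar> < \<alpha> / 2" "\<bar>G b - G0 b\<bar> < (1 - \<alpha>) / 2"
      using close[of a] close[of b] by auto
    then have "G a < \<alpha>" "\<alpha> \<le> G b"
      using a b abs_ge_self[of "G a - G0 a"] abs_ge_minus_self[of "G b - G0 b"]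
      by (simp_all add: abs_less_iff)
    then have "a \<le> VaR \<alpha> G" "VaR \<alpha> G \<le> b"
      by (simp_all add: le_VaR[OF G \<alpha>] VaR_le[OF G \<alpha>])
    then show "\<bar>VaR \<alpha> G\<bar> \<le> \<bar>a\<bar> + \<bar>b\<bar>" by linarith
  qed
qed

lemma indicator_atMost_diff:
  "(a::real) \<le> b \<Longrightarrow> (indicator {..b} y - indicator {..a} y :: real) = indicator {a<..b} y"
  by (auto simp: indicator_def)

lemma integrable_indicator_atMost_diff:
  fixes a b c :: real
  shows "integrable lborel (\<lambda>y. (indicator {..b} y - indicator {..a} y) * c)"
proof (cases "a \<le> b")
  case False
  then have "(\<lambda>y. (indicator {..b} y - indicator {..a} y) * c) = (\<lambda>y. - (indicator {b<..a} y * c))"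
    using indicator_atMost_diff[of b a] by (auto simp: fun_eq_iff algebra_simps)
  then show ?thesis using False by simp
qed (simp add: indicator_atMost_diff)

lemma integral_indicator_atMost_diff:
  fixes a b c :: real
  shows "(\<integral>y. (indicator {..b} y - indicator {..a} y) * c \<partial>lborel) = (b - a) * c"
proof (cases "a \<le> b")
  case False
  then have "(\<lambda>y. (indicator {..b} y - indicator {..a} y) * c) = (\<lambda>y. - (indicator {b<..a} y * c))"
    using indicator_atMost_diff[of b a] by (auto simp: fun_eq_iff algebra_simps)
  then show ?thesis using False by (simp add: algebra_simps)
qed (simp add: indicator_atMost_diff mult.commute)

lemma integral_abs_indicator_atMost_diff:
  fixes a b c :: real
  shows "(\<integral>y. \<bar>indicator {..b} y - indicator {..a} y\<bar> * c \<partial>lborel) = \<bar>b - a\<bar> * c"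
proof (cases "a \<le> b")
  case False
  then have "(\<lambda>y. \<bar>indicator {..b} y - indicator {..a} y\<bar> * c) = (\<lambda>y. indicator {b<..a} y * c)"
    using indicator_atMost_diff[of b a] by (auto simp: fun_eq_iff abs_minus_commute)
  then show ?thesis using False by (simp add: mult.commute)
qed (simp add: indicator_atMost_diff mult.commute)

lemma integrated_cdf_diff:
  assumes "distribution_function G" "LS_neg_finite G"
  shows "integrated_cdf G b - integrated_cdf G a
    = (\<integral>y. (indicator {..b} y - indicator {..a} y) * G y \<partial>lborel)"
  unfolding integrated_cdf_def left_diff_distrib
  by (intro Bochner_Integration.integral_diff[symmetric] integrable_integrated_cdf[OF assms])

lemma CVaR_objective_le:
  assumes G: "distribution_function G" "LS_neg_finite G" and \<alpha>: "0 < \<alpha>" "\<alpha> < 1"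
  shows "c - integrated_cdf G c / \<alpha> \<le> VaR \<alpha> G - integrated_cdf G (VaR \<alpha> G) / \<alpha>"
proof -
  let ?v = "VaR \<alpha> G"
  let ?d = "\<lambda>y. indicator {..?v} y - indicator {..c} y :: real"
  have "AE y in lborel. ?d y * G y \<le> ?d y * \<alpha>"
    using AE_lborel_singleton[of ?v]
  proof eventually_elim
    case (elim y)
    then show ?case
      using df_less_if_less_VaR[OF G(1) \<alpha>, of y] le_df_at_VaR[OF G(1) \<alpha>]
        distribution_function_mono[OF G(1), of ?v y]
      by (auto simp: indicator_def)
  qed
  then have "integrated_cdf G ?v - integrated_cdf G c \<le> (\<integral>y. ?d y * \<alpha> \<partial>lborel)"
    unfolding integrated_cdf_diff[OF G]
    by (intro integral_mono_AE integrable_indicator_atMost_diff)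
      (simp_all add: left_diff_distrib integrable_integrated_cdf[OF G])
  then have "integrated_cdf G ?v - integrated_cdf G c \<le> (?v - c) * \<alpha>"
    by (simp only: integral_indicator_atMost_diff)
  then have "(integrated_cdf G ?v - integrated_cdf G c) / \<alpha> \<le> ?v - c"
    using \<alpha> by (simp add: pos_divide_le_eq)
  then show ?thesis by (simp add: diff_divide_distrib)
qed

lemma integrated_cdf_increment_diff_le:
  assumes G: "distribution_function G" "LS_neg_finite G"
    and H: "distribution_function H" "LS_neg_finite H" and d: "\<And>y. \<bar>G y - H y\<bar> \<le> d"
  shows "\<bar>(integrated_cdf G b - integrated_cdf G a) - (integrated_cdf H b - integrated_cdf H a)\<bar>
    \<le> \<bar>b - a\<bar> * d"
proof -
  let ?d = "\<lambda>y. indicator {..b} y - indicator {..a} y :: real"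
  have int: "integrable lborel (\<lambda>y. ?d y * G y)" "integrable lborel (\<lambda>y. ?d y * H y)"
    by (simp_all add: left_diff_distrib integrable_integrated_cdf[OF G]
        integrable_integrated_cdf[OF H])
  have "\<bar>(integrated_cdf G b - integrated_cdf G a) - (integrated_cdf H b - integrated_cdf H a)\<bar>
      = \<bar>\<integral>y. ?d y * G y - ?d y * H y \<partial>lborel\<bar>"
    unfolding integrated_cdf_diff[OF G] integrated_cdf_diff[OF H]
    by (simp add: Bochner_Integration.integral_diff[OF int])
  also have "\<dots> \<le> (\<integral>y. \<bar>?d y\<bar> * d \<partial>lborel)"
  proof (rule integral_abs_bound_integral)
    show "integrable lborel (\<lambda>y. ?d y * G y - ?d y * H y)" using int by simp
    show "integrable lborel (\<lambda>y. \<bar>?d y\<bar> * d)"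
      by (rule Bochner_Integration.integrable_bound[OF integrable_indicator_atMost_diff[of b a d]])
        (auto simp: indicator_def)
    show "\<bar>?d y * G y - ?d y * H y\<bar> \<le> \<bar>?d y\<bar> * d" for y
      using d[of y] by (auto simp: indicator_def)
  qed
  also have "\<dots> = \<bar>b - a\<bar> * d" by (rule integral_abs_indicator_atMost_diff)
  finally show ?thesis .
qed

lemma abs_le_sup_norm: "bdd_above (range (\<lambda>x. \<bar>H x\<bar>)) \<Longrightarrow> \<bar>H y\<bar> \<le> sup_norm H"
  unfolding sup_norm_def by (rule cSUP_upper) auto

lemma sup_norm_le: "(\<And>y. \<bar>H y\<bar> \<le> c) \<Longrightarrow> sup_norm H \<le> c"
  unfolding sup_norm_def by (rule cSUP_least) auto

lemma bdd_above_abs_diff_unit_valued: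
  fixes G H :: "'a \<Rightarrow> real"
  assumes "\<And>x. 0 \<le> G x \<and> G x \<le> 1" "\<And>x. 0 \<le> H x \<and> H x \<le> 1"
  shows "bdd_above (range (\<lambda>x. \<bar>G x - H x\<bar>))"
proof (rule bdd_aboveI[of _ 1])
  fix z assume "z \<in> range (\<lambda>x. \<bar>G x - H x\<bar>)"
  then obtain x where "z = \<bar>G x - H x\<bar>" by blast
  then show "z \<le> 1" using assms[of x] by auto
qed

lemma abs_diff_le_cvar_norm_dist:
  assumes "distribution_function G" "distribution_function H"
  shows "\<bar>G y - H y\<bar> \<le> cvar_norm_dist G H"
proof -
  have "\<bar>G y - H y\<bar> \<le> sup_norm (\<lambda>x. G x - H x)"
    using assms distribution_function_nonneg distribution_function_le_1
    by (intro abs_le_sup_norm bdd_above_abs_diff_unit_valued) blast+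
  then show ?thesis unfolding cvar_norm_dist_def by linarith
qed

lemma abs_CVaR_diff_le:
  assumes G: "distribution_function G" "LS_neg_finite G"
    and H: "distribution_function H" "LS_neg_finite H" and \<alpha>: "0 < \<alpha>" "\<alpha> < 1"
  shows "\<bar>CVaR \<alpha> G - CVaR \<alpha> H\<bar>
    \<le> ereal ((1 + max \<bar>VaR \<alpha> G\<bar> \<bar>VaR \<alpha> H\<bar>) * cvar_norm_dist G H / \<alpha>)"
proof -
  let ?v = "VaR \<alpha> G" and ?w = "VaR \<alpha> H" and ?d = "cvar_norm_dist G H"
  let ?B = "(1 + max \<bar>?v\<bar> \<bar>?w\<bar>) * ?d"
  have d: "\<bar>G y - H y\<bar> \<le> ?d" for y by (rule abs_diff_le_cvar_norm_dist[OF G(1) H(1)])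
  have J0: "\<bar>integrated_cdf G 0 - integrated_cdf H 0\<bar> \<le> ?d"
    using LS_neg_int_eq_integrated_cdf[OF G] LS_neg_int_eq_integrated_cdf[OF H]
    by (simp add: cvar_norm_dist_def abs_minus_commute)
  have bound: "\<bar>integrated_cdf G c - integrated_cdf H c\<bar> \<le> ?B" if "c \<in> {?v, ?w}" for c
  proof -
    have "\<bar>c\<bar> * ?d \<le> max \<bar>?v\<bar> \<bar>?w\<bar> * ?d"
      using that d[of 0] by (intro mult_right_mono) auto
    then show ?thesis
      using integrated_cdf_increment_diff_le[OF G H d, of c 0] J0
      by (simp add: algebra_simps) (smt (verit) abs_diff_le_iff)
  qed
  have "(?v - integrated_cdf G ?v / \<alpha>) - (?w - integrated_cdf H ?w / \<alpha>)
      \<le> (integrated_cdf H ?v - integrated_cdf G ?v) / \<alpha>"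
    using CVaR_objective_le[OF H \<alpha>, of ?v] by (simp add: diff_divide_distrib)
  also have "\<dots> \<le> ?B / \<alpha>"
    using bound[of ?v] \<alpha> by (intro divide_right_mono) auto
  finally have upper: "(?v - integrated_cdf G ?v / \<alpha>) - (?w - integrated_cdf H ?w / \<alpha>) \<le> ?B / \<alpha>" .
  have "(?w - integrated_cdf H ?w / \<alpha>) - (?v - integrated_cdf G ?v / \<alpha>)
      \<le> (integrated_cdf G ?w - integrated_cdf H ?w) / \<alpha>"
    using CVaR_objective_le[OF G \<alpha>, of ?w] by (simp add: diff_divide_distrib)
  also have "\<dots> \<le> ?B / \<alpha>"
    using bound[of ?w] \<alpha> by (intro divide_right_mono) auto
  finally have lower: "(?w - integrated_cdf H ?w / \<alpha>) - (?v - integrated_cdf G ?v / \<alpha>) \<le> ?B / \<alpha>" .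
  show ?thesis
    using upper lower unfolding CVaR_eq_integrated_cdf[OF G] CVaR_eq_integrated_cdf[OF H]
    by (simp add: abs_le_iff)
qed

lemma CVaR_continuous:
  assumes G0: "distribution_function G0" "LS_neg_finite G0"
    and \<alpha>: "0 < \<alpha>" "\<alpha> < 1" and "0 < \<epsilon>"
  shows "\<exists>\<delta>>0. \<forall>G. distribution_function G \<and> LS_neg_finite G \<and> cvar_norm_dist G G0 < \<delta>
           \<longrightarrow> \<bar>CVaR \<alpha> G - CVaR \<alpha> G0\<bar> < ereal \<epsilon>"
proof -
  obtain R where R: "\<And>G. distribution_function G
      \<Longrightarrow> (\<And>y. \<bar>G y - G0 y\<bar> < min (\<alpha> / 2) ((1 - \<alpha>) / 2)) \<Longrightarrow> \<bar>VaR \<alpha> G\<bar> \<le> R"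
    using VaR_bounded_near[OF G0(1) \<alpha>] by blast
  have VaR0: "\<bar>VaR \<alpha> G0\<bar> \<le> R" using \<alpha> by (intro R[OF G0(1)]) simp
  define \<delta> where "\<delta> = min (min (\<alpha> / 2) ((1 - \<alpha>) / 2)) (\<epsilon> * \<alpha> / (1 + R))"
  have "0 \<le> R" using VaR0 by linarith
  then have "0 < \<delta>" using \<alpha> \<open>0 < \<epsilon>\<close> by (simp add: \<delta>_def)
  have "\<delta> \<le> \<epsilon> * \<alpha> / (1 + R)" by (simp add: \<delta>_def)
  then have "\<delta> * (1 + R) \<le> \<epsilon> * \<alpha>" using \<open>0 \<le> R\<close> by (simp add: pos_le_divide_eq)
  show ?thesis
  proof (intro exI[of _ \<delta>] conjI allI impI \<open>0 < \<delta>\<close>, elim conjE)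
    fix G assume G: "distribution_function G" "LS_neg_finite G" and "cvar_norm_dist G G0 < \<delta>"
    then have "\<bar>G y - G0 y\<bar> < min (\<alpha> / 2) ((1 - \<alpha>) / 2)" for y
      using abs_diff_le_cvar_norm_dist[OF G(1) G0(1), of y] unfolding \<delta>_def by linarith
    then have "(1 + max \<bar>VaR \<alpha> G\<bar> \<bar>VaR \<alpha> G0\<bar>) * cvar_norm_dist G G0 < (1 + R) * \<delta>"
      using R[OF G(1)] VaR0 \<open>cvar_norm_dist G G0 < \<delta>\<close> \<open>0 \<le> R\<close>
      by (intro mult_le_less_imp_less) (auto simp: cvar_norm_dist_def)
    then have "(1 + max \<bar>VaR \<alpha> G\<bar> \<bar>VaR \<alpha> G0\<bar>) * cvar_norm_dist G G0 / \<alpha> < \<epsilon>"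
      using \<alpha> \<open>\<delta> * (1 + R) \<le> \<epsilon> * \<alpha>\<close> by (simp add: pos_divide_less_eq mult.commute)
    then show "\<bar>CVaR \<alpha> G - CVaR \<alpha> G0\<bar> < ereal \<epsilon>"
      using abs_CVaR_diff_le[OF G G0 \<alpha>] by (simp add: le_less_trans)
  qed
qed

section \<open>Etemadi's strong law of large numbers\<close>

lemma LIMSEQ_Cesaro_mean:
  fixes a :: "nat \<Rightarrow> real"
  assumes a: "a \<longlonglongrightarrow> L"
  shows "(\<lambda>n. (\<Sum>i<n. a i) / real n) \<longlonglongrightarrow> L"
proof (rule LIMSEQ_I)
  fix r :: real assume r: "0 < r"
  obtain N where N: "\<And>i. i \<ge> N \<Longrightarrow> \<bar>a i - L\<bar> < r / 2"
    using LIMSEQ_D[OF a, of "r / 2"] r by auto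
  define C where "C = (\<Sum>i<N. \<bar>a i - L\<bar>)"
  obtain M :: nat where M: "2 * C / r < M" using reals_Archimedean2 by blast
  show "\<exists>no. \<forall>n\<ge>no. norm ((\<Sum>i<n. a i) / real n - L) < r"
  proof (intro exI[of _ "max (Suc N) (Suc M)"] allI impI)
    fix n assume n: "max (Suc N) (Suc M) \<le> n"
    then have "N \<le> n" "0 < n" "M < n" by auto
    have "\<bar>\<Sum>i<n. a i - L\<bar> \<le> (\<Sum>i<n. \<bar>a i - L\<bar>)" by (rule sum_abs)
    also have "\<dots> = C + (\<Sum>i\<in>{N..<n}. \<bar>a i - L\<bar>)"
      using \<open>N \<le> n\<close> unfolding C_def by (metis atLeast0LessThan sum.atLeastLessThan_concat zero_le)
    also have "(\<Sum>i\<in>{N..<n}. \<bar>a i - L\<bar>) \<le> (\<Sum>i\<in>{N..<n}. r / 2)"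
      using N by (intro sum_mono) (meson atLeastLessThan_iff less_imp_le)
    also have "\<dots> \<le> real n * (r / 2)" using r by simp
    also have "C < real n * (r / 2)"
    proof -
      have "2 * C / r < real n" using M \<open>M < n\<close> by linarith
      then show ?thesis using r by (simp add: field_simps)
    qed
    finally have "\<bar>\<Sum>i<n. a i - L\<bar> < r * real n" by simp
    moreover have "(\<Sum>i<n. a i) / real n - L = (\<Sum>i<n. a i - L) / real n"
      using \<open>0 < n\<close> by (simp add: sum_subtractf field_simps)
    ultimately show "norm ((\<Sum>i<n. a i) / real n - L) < r"
      using \<open>0 < n\<close> by (simp add: divide_less_eq abs_divide)
  qed
qed

lemma (in prob_space) AE_eventually_notin_if_suminf_finite:
  assumes "\<And>n. A n \<in> events" and "(\<Sum>n. emeasure M (A n)) < \<infinity>"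
  shows "AE x in M. \<forall>\<^sub>F n in sequentially. x \<notin> A n"
proof -
  have "summable (\<lambda>n. prob (A n))"
    using assms by (intro summable_suminf_not_top) (auto simp: emeasure_eq_measure)
  then have "AE x in M. \<forall>\<^sub>F n in sequentially. x \<in> space M - A n"
    using assms(1) by (intro borel_cantelli_AE1) (auto simp: emeasure_eq_measure)
  then show ?thesis by (rule AE_mp) (auto intro!: AE_I2 elim: eventually_mono)
qed

definition geom_index :: "real \<Rightarrow> nat \<Rightarrow> nat" where
  "geom_index \<beta> n = nat \<lfloor>\<beta> ^ n\<rfloor>"

context
  fixes \<beta> :: real assumes \<beta>: "1 < \<beta>"
begin

lemma real_geom_index: "real (geom_index \<beta> n) = of_int \<lfloor>\<beta> ^ n\<rfloor>"
  using \<beta> unfolding geom_index_def by (simp add: one_le_power less_imp_le)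

lemma geom_index_ge_1: "1 \<le> geom_index \<beta> n"
  using \<beta> unfolding geom_index_def by (simp add: le_nat_iff one_le_power less_imp_le)

lemma geom_index_le: "real (geom_index \<beta> n) \<le> \<beta> ^ n"
  unfolding real_geom_index by simp

lemma geom_index_ge_half: "\<beta> ^ n / 2 \<le> real (geom_index \<beta> n)"
proof -
  have "1 \<le> real (geom_index \<beta> n)" using geom_index_ge_1[of n] by simp
  then show ?thesis using real_geom_index[of n] real_of_int_floor_gt_diff_one[of "\<beta> ^ n"]
    by linarith
qed

lemma geom_index_mono: "m \<le> n \<Longrightarrow> geom_index \<beta> m \<le> geom_index \<beta> n"
  unfolding geom_index_def using \<beta> by (intro nat_mono floor_mono power_increasing) auto

lemma eventually_le_power: "\<forall>\<^sub>F n in sequentially. c \<le> \<beta> ^ n"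
proof -
  obtain N where "c < \<beta> ^ N" using real_arch_pow[OF \<beta>] by blast
  then show ?thesis
    using \<beta> by (intro eventually_sequentiallyI[of N]) (smt (verit) power_increasing)
qed

lemma filterlim_geom_index: "filterlim (geom_index \<beta>) at_top sequentially"
  unfolding filterlim_at_top
proof
  fix Z :: nat
  show "\<forall>\<^sub>F n in sequentially. Z \<le> geom_index \<beta> n"
    using eventually_le_power[of "2 * real Z"]
  proof eventually_elim
    case (elim n)
    then have "real Z \<le> real (geom_index \<beta> n)" using geom_index_ge_half[of n] by linarith
    then show ?case by simp
  qed
qed

lemma eventually_geom_index_Suc_le:
  "\<forall>\<^sub>F p in sequentially. real (geom_index \<beta> (Suc p)) \<le> \<beta>\<^sup>2 * real (geom_index \<beta> p)"
  using eventually_le_power[of "\<beta> / (\<beta> - 1)"]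
proof eventually_elim
  case (elim p)
  then have "\<beta> \<le> (\<beta> - 1) * \<beta> ^ p" using \<beta> by (simp add: field_simps)
  then have "\<beta> * \<beta> \<le> \<beta> * ((\<beta> - 1) * \<beta> ^ p)" using \<beta> by (intro mult_left_mono) auto
  then have "\<beta> ^ Suc p \<le> \<beta>\<^sup>2 * (\<beta> ^ p - 1)" by (simp add: power2_eq_square algebra_simps)
  also have "\<dots> \<le> \<beta>\<^sup>2 * real (geom_index \<beta> p)"
    using real_geom_index[of p] real_of_int_floor_gt_diff_one[of "\<beta> ^ p"]
      by (intro mult_left_mono) auto
  finally show ?case using geom_index_le[of "Suc p"] by linarith
qed

lemma geom_index_bracket:
  assumes "geom_index \<beta> P \<le> n"
  obtains p where "P \<le> p" "geom_index \<beta> p \<le> n" "n < geom_index \<beta> (Suc p)"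
proof -
  obtain N where "\<forall>m\<ge>N. Suc n \<le> geom_index \<beta> m"
    using filterlim_geom_index unfolding filterlim_at_top eventually_sequentially by blast
  then have ex: "\<exists>q. n < geom_index \<beta> q" by (metis Suc_le_eq order_refl)
  define q where "q = (LEAST q. n < geom_index \<beta> q)"
  have "n < geom_index \<beta> q" unfolding q_def by (rule LeastI_ex[OF ex])
  moreover have "P < q"
    using geom_index_mono[of q P] assms \<open>n < geom_index \<beta> q\<close> by (cases "P < q") auto
  moreover have "geom_index \<beta> (q - 1) \<le> n"
    using not_less_Least[of "q - 1" "\<lambda>q. n < geom_index \<beta> q"] \<open>P < q\<close> unfolding q_def by auto
  ultimately show ?thesis using that[of "q - 1"] by auto
qed

end

lemma mean_lower_bound_arith:
  fixes b \<mu> r :: real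
  assumes "1 < b" "0 \<le> \<mu>" "0 < r"
  shows "\<mu> - ((b - 1) * \<mu> + r) < (\<mu> - r / b) / b"
proof -
  have "0 \<le> (b - 1)\<^sup>2" by simp
  then have "(2 - b) * b \<le> 1" by (simp add: power2_eq_square algebra_simps)
  then have "\<mu> * (2 - b) * b \<le> \<mu>"
    using mult_left_mono[of "(2 - b) * b" 1 \<mu>] assms by (simp add: mult.assoc)
  then have "\<mu> * (2 - b) \<le> \<mu> / b"
    using assms by (subst pos_le_divide_eq) auto
  moreover have "r / b / b < r"
    using assms by (simp add: field_simps) (smt (verit) mult_less_cancel_left2 one_less_mult)
  ultimately show ?thesis by (simp add: diff_divide_distrib algebra_simps)
qed

lemma mean_bounds_between:
  fixes y :: "nat \<Rightarrow> real" and a b n :: nat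
  assumes y: "\<And>i. 0 \<le> y i" and "0 < a" "a \<le> n" "n < b" "real b \<le> c * real a"
    and lower_a: "(\<mu> - \<eta>) * real a < (\<Sum>i<a. y i)" and upper_b: "(\<Sum>i<b. y i) < (\<mu> + \<eta>) * real b"
    and "0 \<le> \<mu> + \<eta>" "0 < c"
  shows "(\<mu> - \<eta>) / c \<le> (\<Sum>i<n. y i) / real n" "(\<Sum>i<n. y i) / real n < c * (\<mu> + \<eta>)"
proof -
  have S_mono: "m \<le> k \<Longrightarrow> (\<Sum>i<m. y i) \<le> (\<Sum>i<k. y i)" for m k
    using y by (intro sum_mono2) auto
  have "0 < real n" using \<open>0 < a\<close> \<open>a \<le> n\<close> by simp
  have "real b \<le> c * real n"
    using \<open>real b \<le> c * real a\<close> \<open>a \<le> n\<close> \<open>0 < c\<close> by (smt (verit) mult_left_mono of_nat_mono)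
  have "(\<Sum>i<n. y i) < (\<mu> + \<eta>) * (c * real n)"
    using S_mono[of n b] upper_b mult_left_mono[OF \<open>real b \<le> c * real n\<close> \<open>0 \<le> \<mu> + \<eta>\<close>] \<open>n < b\<close>
    by linarith
  then show "(\<Sum>i<n. y i) / real n < c * (\<mu> + \<eta>)"
    using \<open>0 < real n\<close> by (simp add: pos_divide_less_eq algebra_simps)
  show "(\<mu> - \<eta>) / c \<le> (\<Sum>i<n. y i) / real n"
  proof (cases "\<mu> - \<eta> \<le> 0")
    case True
    then have "(\<mu> - \<eta>) / c \<le> 0" using \<open>0 < c\<close> by (simp add: divide_nonpos_pos)
    also have "0 \<le> (\<Sum>i<n. y i) / real n" by (auto intro!: divide_nonneg_nonneg sum_nonneg y)
    finally show ?thesis .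
  next
    case False
    have "real n / c \<le> real a"
      using \<open>n < b\<close> \<open>real b \<le> c * real a\<close> \<open>0 < c\<close> by (simp add: divide_le_eq mult.commute)
    then have "(\<mu> - \<eta>) * (real n / c) \<le> (\<mu> - \<eta>) * real a"
      using False by (intro mult_left_mono) auto
    with lower_a S_mono[OF \<open>a \<le> n\<close>] have "(\<mu> - \<eta>) * (real n / c) \<le> (\<Sum>i<n. y i)" by linarith
    then show ?thesis using \<open>0 < real n\<close> by (simp add: field_simps)
  qed
qed

lemma eventually_mean_close_if_geom_subsequence:
  fixes y :: "nat \<Rightarrow> real"
  assumes \<beta>: "1 < \<beta>" and y: "\<And>i. 0 \<le> y i" and "0 < r"
    and lim: "(\<lambda>n. (\<Sum>i<geom_index \<beta> n. y i) / real (geom_index \<beta> n)) \<longlonglongrightarrow> \<mu>"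
  shows "\<forall>\<^sub>F n in sequentially. \<bar>(\<Sum>i<n. y i) / real n - \<mu>\<bar> < (\<beta>\<^sup>2 - 1) * \<mu> + r"
proof -
  let ?k = "geom_index \<beta>"
  have "0 \<le> \<mu>"
    by (rule LIMSEQ_le_const[OF lim]) (auto intro!: divide_nonneg_nonneg sum_nonneg y)
  have "1 < \<beta>\<^sup>2" using \<beta> by (simp add: one_less_power)
  define \<eta> where "\<eta> = r / \<beta>\<^sup>2"
  have "0 < \<eta>" unfolding \<eta>_def using \<open>0 < r\<close> \<open>1 < \<beta>\<^sup>2\<close> by (intro divide_pos_pos) auto
  have "\<forall>\<^sub>F p in sequentially. \<bar>(\<Sum>i<?k p. y i) / real (?k p) - \<mu>\<bar> < \<eta>"
    using LIMSEQ_D[OF lim \<open>0 < \<eta>\<close>] by (auto simp: eventually_sequentially)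
  from eventually_conj[OF this eventually_geom_index_Suc_le[OF \<beta>]]
  obtain P where P: "\<And>p. P \<le> p \<Longrightarrow> \<bar>(\<Sum>i<?k p. y i) / real (?k p) - \<mu>\<bar> < \<eta>
      \<and> real (?k (Suc p)) \<le> \<beta>\<^sup>2 * real (?k p)"
    by (auto simp: eventually_sequentially)
  show ?thesis
  proof (rule eventually_sequentiallyI[of "?k P"])
    fix n assume "?k P \<le> n"
    then obtain p where p: "P \<le> p" "?k p \<le> n" "n < ?k (Suc p)"
      using geom_index_bracket[OF \<beta>] by blast
    have k: "0 < ?k p" "0 < real (?k (Suc p))"
      using geom_index_ge_1[OF \<beta>] by (auto simp: Suc_le_eq)
    have "\<mu> - \<eta> < (\<Sum>i<?k p. y i) / real (?k p)" "(\<Sum>i<?k (Suc p). y i) / real (?k (Suc p)) < \<mu> + \<eta>"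
      using P[OF p(1)] P[of "Suc p"] p(1) by (auto simp: abs_less_iff)
    then have "(\<mu> - \<eta>) * real (?k p) < (\<Sum>i<?k p. y i)"
      "(\<Sum>i<?k (Suc p). y i) < (\<mu> + \<eta>) * real (?k (Suc p))"
      using k by (simp_all add: pos_less_divide_eq pos_divide_less_eq)
    from mean_bounds_between[OF y k(1) p(2,3) conjunct2[OF P[OF p(1)]] this]
    have bounds: "(\<mu> - \<eta>) / \<beta>\<^sup>2 \<le> (\<Sum>i<n. y i) / real n" "(\<Sum>i<n. y i) / real n < \<beta>\<^sup>2 * (\<mu> + \<eta>)"
      using \<open>0 \<le> \<mu>\<close> \<open>0 < \<eta>\<close> \<beta> by auto
    have "\<beta>\<^sup>2 * (\<mu> + \<eta>) = \<mu> + ((\<beta>\<^sup>2 - 1) * \<mu> + r)"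
      using \<beta> by (simp add: \<eta>_def algebra_simps)
    moreover have "\<mu> - ((\<beta>\<^sup>2 - 1) * \<mu> + r) < (\<mu> - \<eta>) / \<beta>\<^sup>2"
      unfolding \<eta>_def using \<open>1 < \<beta>\<^sup>2\<close> \<open>0 \<le> \<mu>\<close> \<open>0 < r\<close> by (rule mean_lower_bound_arith)
    ultimately show "\<bar>(\<Sum>i<n. y i) / real n - \<mu>\<bar> < (\<beta>\<^sup>2 - 1) * \<mu> + r"
      using bounds by (simp add: abs_less_iff)
  qed
qed

lemma LIMSEQ_mean_if_geom_subsequences:
  fixes y :: "nat \<Rightarrow> real"
  assumes y: "\<And>i. 0 \<le> y i"
    and lim: "\<And>j. (\<lambda>n. (\<Sum>i<geom_index (1 + 1 / Suc j) n. y i)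
      / real (geom_index (1 + 1 / Suc j) n)) \<longlonglongrightarrow> \<mu>"
  shows "(\<lambda>n. (\<Sum>i<n. y i) / real n) \<longlonglongrightarrow> \<mu>"
proof (rule LIMSEQ_I)
  fix r :: real assume "0 < r"
  have "(\<lambda>j. 1 / real (Suc j)) \<longlonglongrightarrow> 0"
    using LIMSEQ_Suc[OF lim_1_over_n] by simp
  then have "(\<lambda>j. ((1 + 1 / real (Suc j))\<^sup>2 - 1) * \<mu>) \<longlonglongrightarrow> ((1 + 0)\<^sup>2 - 1) * \<mu>"
    by (intro tendsto_intros)
  then have "\<forall>\<^sub>F j in sequentially. ((1 + 1 / real (Suc j))\<^sup>2 - 1) * \<mu> < r / 2"
    using \<open>0 < r\<close> by (intro order_tendstoD(2)) auto
  then obtain j where j: "((1 + 1 / real (Suc j))\<^sup>2 - 1) * \<mu> < r / 2"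
    using eventually_happens'[OF sequentially_bot] by blast
  have "\<forall>\<^sub>F n in sequentially.
      \<bar>(\<Sum>i<n. y i) / real n - \<mu>\<bar> < ((1 + 1 / real (Suc j))\<^sup>2 - 1) * \<mu> + r / 2"
    using \<open>0 < r\<close> by (intro eventually_mean_close_if_geom_subsequence y lim) auto
  then have "\<forall>\<^sub>F n in sequentially. norm ((\<Sum>i<n. y i) / real n - \<mu>) < r"
    by eventually_elim (use j in simp)
  then show "\<exists>no. \<forall>n\<ge>no. norm ((\<Sum>i<n. y i) / real n - \<mu>) < r"
    by (simp add: eventually_sequentially)
qed

definition trunc_at :: "real \<Rightarrow> real \<Rightarrow> real" where
  "trunc_at c y = (if y \<le> c then y else 0)"

lemma trunc_at_measurable[measurable]: "trunc_at c \<in> borel_measurable borel"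
  unfolding trunc_at_def by measurable

lemma trunc_at_nonneg: "0 \<le> y \<Longrightarrow> 0 \<le> trunc_at c y"
  by (simp add: trunc_at_def)

lemma trunc_at_le: "0 \<le> y \<Longrightarrow> trunc_at c y \<le> y"
  by (simp add: trunc_at_def)

lemma trunc_at_le_bound: "0 \<le> y \<Longrightarrow> trunc_at c y \<le> max 0 c"
  by (simp add: trunc_at_def)

lemma suminf_of_bool_less_le:
  fixes y :: real assumes "0 \<le> y"
  shows "(\<Sum>i. ennreal (of_bool (real (Suc i) < y))) \<le> ennreal y"
proof (rule suminf_le_const)
  fix N
  have "(\<Sum>i<N. of_bool (real (Suc i) < y)) \<le> y"
  proof (induction N)
    case (Suc N)
    have "(\<Sum>i<Suc N. of_bool (real (Suc i) < y) :: real) \<le> (\<Sum>i<Suc N. 1)"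
      by (intro sum_mono) auto
    then show ?case using Suc.IH by (cases "real (Suc N) < y") auto
  qed (use assms in simp)
  then show "(\<Sum>i<N. ennreal (of_bool (real (Suc i) < y))) \<le> ennreal y"
    by (simp add: ennreal_leI sum_ennreal)
qed auto

lemma suminf_square_over_power_le:
  fixes \<beta> y :: real
  assumes \<beta>: "1 < \<beta>" and "0 \<le> y"
  shows "(\<Sum>n. ennreal (y\<^sup>2 * of_bool (y \<le> \<beta> ^ n) / \<beta> ^ n)) \<le> ennreal (y * \<beta> / (\<beta> - 1))"
proof -
  have ex: "\<exists>n. y \<le> \<beta> ^ n" using real_arch_pow[OF \<beta>, of y] by (auto intro: less_imp_le)
  define n0 where "n0 = (LEAST n. y \<le> \<beta> ^ n)"
  have "y \<le> \<beta> ^ n0" unfolding n0_def by (rule LeastI_ex[OF ex])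
  define g where "g n = (if n0 \<le> n then ennreal (y * (1 / \<beta>) ^ (n - n0)) else 0)" for n
  have "ennreal (y\<^sup>2 * of_bool (y \<le> \<beta> ^ n) / \<beta> ^ n) \<le> g n" for n
  proof (cases "y \<le> \<beta> ^ n")
    case True
    then have "n0 \<le> n" unfolding n0_def by (rule Least_le)
    then have "\<beta> ^ n = \<beta> ^ n0 * \<beta> ^ (n - n0)" by (simp add: power_add[symmetric])
    then have "y\<^sup>2 / \<beta> ^ n = y * ((y / \<beta> ^ n0) * (1 / \<beta>) ^ (n - n0))"
      by (simp add: power2_eq_square power_one_over)
    also have "\<dots> \<le> y * (1 * (1 / \<beta>) ^ (n - n0))"
      using \<open>y \<le> \<beta> ^ n0\<close> \<beta> \<open>0 \<le> y\<close>
        by (intro mult_left_mono mult_right_mono) (auto simp: divide_le_eq)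
    finally show ?thesis using True \<open>n0 \<le> n\<close> unfolding g_def by (simp add: ennreal_leI)
  qed simp
  then have "(\<Sum>n. ennreal (y\<^sup>2 * of_bool (y \<le> \<beta> ^ n) / \<beta> ^ n)) \<le> (\<Sum>n. g n)"
    by (intro suminf_le) auto
  also have "(\<Sum>n. g n) = (\<Sum>j. g (j + n0)) + (\<Sum>j<n0. g j)"
    by (rule suminf_offset) simp
  also have "\<dots> = ennreal (\<Sum>j. y * (1 / \<beta>) ^ j)"
    using \<beta> \<open>0 \<le> y\<close> unfolding g_def
    by (simp, intro suminf_ennreal2) (auto intro!: summable_mult summable_geometric)
  also have "(\<Sum>j. y * (1 / \<beta>) ^ j) = y * \<beta> / (\<beta> - 1)"
  proof -
    have "(\<lambda>j. y * (1 / \<beta>) ^ j) sums (y * (1 / (1 - 1 / \<beta>)))"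
      using \<beta> by (intro sums_mult geometric_sums) simp
    then show ?thesis using \<beta> by (simp add: sums_iff field_simps)
  qed
  finally show ?thesis .
qed

lemma sum_trunc_at_square_le:
  fixes \<beta> y \<epsilon> :: real
  assumes \<beta>: "1 < \<beta>" and "0 \<le> y" and "0 < \<epsilon>"
  shows "(\<Sum>i<geom_index \<beta> n. (trunc_at (Suc i) y)\<^sup>2) / (\<epsilon> * real (geom_index \<beta> n))\<^sup>2
      \<le> 2 / \<epsilon>\<^sup>2 * (y\<^sup>2 * of_bool (y \<le> \<beta> ^ n) / \<beta> ^ n)"
proof -
  let ?k = "geom_index \<beta> n"
  define c where "c = y\<^sup>2 * of_bool (y \<le> \<beta> ^ n)"
  have "0 \<le> c" "0 < real ?k" "0 < \<beta> ^ n"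
    using geom_index_ge_1[OF \<beta>, of n] \<beta> by (auto simp: c_def)
  have "(trunc_at (Suc i) y)\<^sup>2 \<le> c" if "i < ?k" for i
  proof -
    have "real (Suc i) \<le> \<beta> ^ n" using that geom_index_le[OF \<beta>, of n] by linarith
    then show ?thesis by (auto simp: trunc_at_def c_def)
  qed
  then have "(\<Sum>i<?k. (trunc_at (Suc i) y)\<^sup>2) \<le> c * real ?k"
    using sum_mono[of "{..<?k}" "\<lambda>i. (trunc_at (Suc i) y)\<^sup>2" "\<lambda>_. c"] by (simp add: mult.commute)
  then have "(\<Sum>i<?k. (trunc_at (Suc i) y)\<^sup>2) / (\<epsilon> * real ?k)\<^sup>2 \<le> c / (\<epsilon>\<^sup>2 * real ?k)"
    using \<open>0 < real ?k\<close> \<open>0 < \<epsilon>\<close> by (simp add: divide_simps power2_eq_square mult_left_mono)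
  also have "\<dots> \<le> c / (\<epsilon>\<^sup>2 * (\<beta> ^ n / 2))"
    using geom_index_ge_half[OF \<beta>, of n] \<open>0 < \<epsilon>\<close> \<open>0 < \<beta> ^ n\<close> \<open>0 \<le> c\<close>
    by (intro divide_left_mono mult_left_mono mult_pos_pos) auto
  also have "\<dots> = 2 / \<epsilon>\<^sup>2 * (c / \<beta> ^ n)" by (simp add: field_simps)
  finally show ?thesis unfolding c_def .
qed

locale pairwise_iid_nonneg = prob_space +
  fixes Y :: "nat \<Rightarrow> 'a \<Rightarrow> real"
  assumes measurable_Y[measurable]: "\<And>i. Y i \<in> borel_measurable M"
    and Y_nonneg: "\<And>i x. 0 \<le> Y i x"
    and indep_Y: "\<And>i j. i \<noteq> j \<Longrightarrow> indep_var borel (Y i) borel (Y j)"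
    and distr_Y: "\<And>i. distr M borel (Y i) = distr M borel (Y 0)"
    and integrable_Y: "integrable M (Y 0)"
begin

lemma expectation_comp_Y:
  fixes g :: "real \<Rightarrow> real"
  shows "g \<in> borel_measurable borel
    \<Longrightarrow> expectation (\<lambda>x. g (Y i x)) = expectation (\<lambda>x. g (Y 0 x))"
  using integral_distr[of "Y i" M borel g] integral_distr[of "Y 0" M borel g] distr_Y[of i] by simp

lemma nn_integral_comp_Y:
  "g \<in> borel_measurable borel \<Longrightarrow> (\<integral>\<^sup>+x. g (Y i x) \<partial>M) = (\<integral>\<^sup>+x. g (Y 0 x) \<partial>M)"
  using nn_integral_distr[of "Y i" M borel g] nn_integral_distr[of "Y 0" M borel g] distr_Y[of i]
    by simp

definition truncY :: "nat \<Rightarrow> 'a \<Rightarrow> real" where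
  "truncY i x = trunc_at (Suc i) (Y i x)"

lemma truncY_measurable[measurable]: "truncY i \<in> borel_measurable M"
  unfolding truncY_def by measurable

lemma truncY_nonneg: "0 \<le> truncY i x"
  unfolding truncY_def by (rule trunc_at_nonneg[OF Y_nonneg])

lemma truncY_le: "truncY i x \<le> Suc i"
  unfolding truncY_def using trunc_at_le_bound[OF Y_nonneg] by (metis max_def of_nat_0_le_iff)

lemma integrable_truncY: "integrable M (truncY i)"
  using truncY_nonneg truncY_le by (intro integrable_const_bound[where B="real (Suc i)"]) auto

lemma integrable_trunc_at_Y_square: "integrable M (\<lambda>x. (trunc_at c (Y i x))\<^sup>2)"
  using trunc_at_nonneg[OF Y_nonneg] trunc_at_le_bound[OF Y_nonneg]
  by (intro integrable_const_bound[where B="(max 0 c)\<^sup>2"]) (auto intro!: power_mono)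

lemma integrable_truncY_mult: "integrable M (\<lambda>x. truncY i x * truncY j x)"
  using truncY_nonneg truncY_le
  by (intro integrable_const_bound[where B="real (Suc i) * real (Suc j)"]) (auto intro!: mult_mono)

definition centered_trunc_sum :: "nat \<Rightarrow> 'a \<Rightarrow> real" where
  "centered_trunc_sum n x = (\<Sum>i<n. truncY i x) - (\<Sum>i<n. expectation (truncY i))"

lemma centered_trunc_sum_measurable[measurable]: "centered_trunc_sum n \<in> borel_measurable M"
  unfolding centered_trunc_sum_def by measurable

lemma expectation_square_centered_trunc_sum_le:
  "expectation (\<lambda>x. (centered_trunc_sum n x)\<^sup>2) \<le> (\<Sum>i<n. expectation (\<lambda>x. (truncY i x)\<^sup>2))"
proof -
  let ?W = "\<lambda>i x. truncY i x - expectation (truncY i)"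
  have integrable_W: "integrable M (?W i)" for i
    using integrable_truncY[of i] by simp
  have integrable_WW: "integrable M (\<lambda>x. ?W i x * ?W j x)" for i j
    using integrable_truncY integrable_truncY_mult[of i j] by (simp add: algebra_simps)
  have uncorrelated: "expectation (\<lambda>x. ?W i x * ?W j x) = 0" if "i \<noteq> j" for i j
  proof -
    have "indep_var borel ((\<lambda>y. trunc_at (Suc i) y - expectation (truncY i)) \<circ> Y i)
        borel ((\<lambda>y. trunc_at (Suc j) y - expectation (truncY j)) \<circ> Y j)"
      by (rule indep_var_compose[OF indep_Y[OF that]]) auto
    then have "indep_var borel (?W i) borel (?W j)" by (simp add: comp_def truncY_def)
    from indep_var_lebesgue_integral[OF this integrable_W integrable_W] show ?thesis
      using integrable_truncY by (simp add: prob_space)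
  qed
  have "expectation (\<lambda>x. (centered_trunc_sum n x)\<^sup>2)
      = (\<Sum>i<n. \<Sum>j<n. expectation (\<lambda>x. ?W i x * ?W j x))"
    by (simp add: centered_trunc_sum_def sum_subtractf[symmetric] power2_eq_square sum_product
        integrable_WW)
  also have "\<dots> = (\<Sum>i<n. expectation (\<lambda>x. (?W i x)\<^sup>2))"
  proof (intro sum.cong refl)
    fix i assume "i \<in> {..<n}"
    have "(\<Sum>j<n. expectation (\<lambda>x. ?W i x * ?W j x))
        = (\<Sum>j<n. if j = i then expectation (\<lambda>x. (?W i x)\<^sup>2) else 0)"
      by (intro sum.cong refl) (simp add: uncorrelated power2_eq_square)
    then show "(\<Sum>j<n. expectation (\<lambda>x. ?W i x * ?W j x)) = expectation (\<lambda>x. (?W i x)\<^sup>2)"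
      using \<open>i \<in> {..<n}\<close> by simp
  qed
  also have "\<dots> \<le> (\<Sum>i<n. expectation (\<lambda>x. (truncY i x)\<^sup>2))"
  proof (rule sum_mono)
    fix i
    show "expectation (\<lambda>x. (?W i x)\<^sup>2) \<le> expectation (\<lambda>x. (truncY i x)\<^sup>2)"
      using variance_eq[of "truncY i"] integrable_truncY[of i] integrable_truncY_mult[of i i]
      by (simp add: power2_eq_square)
  qed
  finally show ?thesis .
qed

lemma prob_centered_trunc_sum_ge_le:
  assumes "0 < a"
  shows "prob {x \<in> space M. a \<le> \<bar>centered_trunc_sum n x\<bar>}
    \<le> expectation (\<lambda>x. \<Sum>i<n. (trunc_at (Suc i) (Y 0 x))\<^sup>2) / a\<^sup>2"
proof -
  let ?S = "\<lambda>x. \<Sum>i<n. truncY i x"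
  have "integrable M (\<lambda>x. (?S x)\<^sup>2)"
    using integrable_truncY_mult by (simp add: power2_eq_square sum_product)
  moreover have mean: "expectation ?S = (\<Sum>i<n. expectation (truncY i))"
    using integrable_truncY by (simp add: Bochner_Integration.integral_sum)
  ultimately have "prob {x \<in> space M. a \<le> \<bar>centered_trunc_sum n x\<bar>} \<le> variance ?S / a\<^sup>2"
    using Chebyshev_inequality[OF _ _ assms, of ?S] by (simp add: centered_trunc_sum_def)
  also have "variance ?S = expectation (\<lambda>x. (centered_trunc_sum n x)\<^sup>2)"
    by (simp add: mean centered_trunc_sum_def)
  also have "\<dots> \<le> (\<Sum>i<n. expectation (\<lambda>x. (truncY i x)\<^sup>2))"
    by (rule expectation_square_centered_trunc_sum_le)
  also have "\<dots> = expectation (\<lambda>x. \<Sum>i<n. (trunc_at (Suc i) (Y 0 x))\<^sup>2)"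
  proof -
    have "expectation (\<lambda>x. (truncY i x)\<^sup>2) = expectation (\<lambda>x. (trunc_at (Suc i) (Y 0 x))\<^sup>2)" for i
      unfolding truncY_def by (rule expectation_comp_Y) simp
    then show ?thesis
      by (simp add: Bochner_Integration.integral_sum integrable_trunc_at_Y_square)
  qed
  finally show ?thesis using assms by (simp add: divide_right_mono)
qed

lemma AE_eventually_Y_eq_truncY: "AE x in M. \<forall>\<^sub>F i in sequentially. Y i x = truncY i x"
proof -
  define A where "A i = {x \<in> space M. real (Suc i) < Y i x}" for i
  have A[measurable]: "A i \<in> events" for i unfolding A_def by measurable
  have "emeasure M (A i) = (\<integral>\<^sup>+x. indicator (A i) x \<partial>M)" for i
    by simp
  also have "\<dots> i = (\<integral>\<^sup>+x. ennreal (of_bool (real (Suc i) < Y i x)) \<partial>M)" for i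
    by (intro nn_integral_cong) (simp add: A_def)
  also have "\<dots> i = (\<integral>\<^sup>+x. ennreal (of_bool (real (Suc i) < Y 0 x)) \<partial>M)" for i
    by (rule nn_integral_comp_Y) measurable
  finally have "(\<Sum>i. emeasure M (A i))
      = (\<integral>\<^sup>+x. (\<Sum>i. ennreal (of_bool (real (Suc i) < Y 0 x))) \<partial>M)"
    by (simp add: nn_integral_suminf)
  also have "\<dots> \<le> (\<integral>\<^sup>+x. ennreal (Y 0 x) \<partial>M)"
    by (intro nn_integral_mono suminf_of_bool_less_le Y_nonneg)
  also have "\<dots> < \<infinity>"
    using integrableD(2)[OF integrable_Y] by (simp add: less_top)
  finally have "AE x in M. \<forall>\<^sub>F i in sequentially. x \<notin> A i"
    by (intro AE_eventually_notin_if_suminf_finite A)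
  then show ?thesis
    by (rule AE_mp) (auto intro!: AE_I2 elim!: eventually_mono simp: A_def truncY_def trunc_at_def)
qed

lemma LIMSEQ_expectation_truncY: "(\<lambda>i. expectation (truncY i)) \<longlonglongrightarrow> expectation (Y 0)"
proof -
  have "expectation (truncY i) = expectation (\<lambda>x. trunc_at (Suc i) (Y 0 x))" for i
    unfolding truncY_def by (rule expectation_comp_Y) simp
  moreover have "(\<lambda>i. expectation (\<lambda>x. trunc_at (Suc i) (Y 0 x))) \<longlonglongrightarrow> expectation (Y 0)"
  proof (rule integral_dominated_convergence[where w="Y 0"])
    show "AE x in M. (\<lambda>i. trunc_at (Suc i) (Y 0 x)) \<longlonglongrightarrow> Y 0 x"
    proof (intro AE_I2 tendsto_eventually)
      fix x
      obtain N :: nat where "Y 0 x \<le> real N" using real_arch_simple by blast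
      then show "\<forall>\<^sub>F i in sequentially. trunc_at (Suc i) (Y 0 x) = Y 0 x"
        by (intro eventually_sequentiallyI[of N]) (auto simp: trunc_at_def)
    qed
  qed (auto simp: integrable_Y trunc_at_nonneg trunc_at_le Y_nonneg)
  ultimately show ?thesis by simp
qed

lemma emeasure_centered_trunc_sum_geom_index_le:
  fixes n :: nat
  assumes \<beta>: "1 < \<beta>" and "0 < \<epsilon>"
  defines "k \<equiv> geom_index \<beta> n"
  shows "emeasure M {x \<in> space M. \<epsilon> * real k \<le> \<bar>centered_trunc_sum k x\<bar>}
    \<le> (\<integral>\<^sup>+x. ennreal (2 / \<epsilon>\<^sup>2 * ((Y 0 x)\<^sup>2 * of_bool (Y 0 x \<le> \<beta> ^ n) / \<beta> ^ n)) \<partial>M)"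
proof -
  let ?h = "\<lambda>x. (\<Sum>i<k. (trunc_at (Suc i) (Y 0 x))\<^sup>2) / (\<epsilon> * real k)\<^sup>2"
  have "0 < \<epsilon> * real k"
    using \<open>0 < \<epsilon>\<close> geom_index_ge_1[OF \<beta>, of n] by (simp add: k_def)
  have "integrable M ?h"
    by (intro integrable_divide_zero Bochner_Integration.integrable_sum
        integrable_trunc_at_Y_square)
  have "emeasure M {x \<in> space M. \<epsilon> * real k \<le> \<bar>centered_trunc_sum k x\<bar>} \<le> ennreal (expectation ?h)"
    using prob_centered_trunc_sum_ge_le[OF \<open>0 < \<epsilon> * real k\<close>, of k]
    by (simp add: emeasure_eq_measure ennreal_leI)
  also have "\<dots> = (\<integral>\<^sup>+x. ennreal (?h x) \<partial>M)"
    by (rule nn_integral_eq_integral[symmetric, OF \<open>integrable M ?h\<close>])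
      (auto intro!: divide_nonneg_nonneg sum_nonneg)
  also have "\<dots> \<le> (\<integral>\<^sup>+x. ennreal (2 / \<epsilon>\<^sup>2 * ((Y 0 x)\<^sup>2 * of_bool (Y 0 x \<le> \<beta> ^ n) / \<beta> ^ n)) \<partial>M)"
    unfolding k_def
    by (intro nn_integral_mono ennreal_leI sum_trunc_at_square_le \<beta> Y_nonneg \<open>0 < \<epsilon>\<close>)
  finally show ?thesis .
qed

lemma suminf_emeasure_centered_trunc_sum_geom_index_finite:
  assumes \<beta>: "1 < \<beta>" and "0 < \<epsilon>"
  shows "(\<Sum>n. emeasure M {x \<in> space M.
    \<epsilon> * real (geom_index \<beta> n) \<le> \<bar>centered_trunc_sum (geom_index \<beta> n) x\<bar>}) < \<infinity>"
proof -
  let ?f = "\<lambda>n y. y\<^sup>2 * of_bool (y \<le> \<beta> ^ n) / \<beta> ^ n"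
  have "(\<Sum>n. emeasure M {x \<in> space M.
      \<epsilon> * real (geom_index \<beta> n) \<le> \<bar>centered_trunc_sum (geom_index \<beta> n) x\<bar>})
    \<le> (\<Sum>n. \<integral>\<^sup>+x. ennreal (2 / \<epsilon>\<^sup>2) * ennreal (?f n (Y 0 x)) \<partial>M)"
    using emeasure_centered_trunc_sum_geom_index_le[OF assms] \<beta>
    by (intro suminf_le) (auto simp: ennreal_mult[symmetric])
  also have "\<dots> = (\<integral>\<^sup>+x. ennreal (2 / \<epsilon>\<^sup>2) * (\<Sum>n. ennreal (?f n (Y 0 x))) \<partial>M)"
    by (subst nn_integral_suminf[symmetric]) auto
  also have "\<dots> \<le> (\<integral>\<^sup>+x. ennreal (2 / \<epsilon>\<^sup>2) * ennreal (\<beta> / (\<beta> - 1) * Y 0 x) \<partial>M)"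
    using suminf_square_over_power_le[OF \<beta> Y_nonneg]
    by (intro nn_integral_mono mult_left_mono) (auto simp: mult.commute)
  also have "\<dots> = ennreal (2 / \<epsilon>\<^sup>2) * ennreal (\<beta> / (\<beta> - 1)) * (\<integral>\<^sup>+x. ennreal (Y 0 x) \<partial>M)"
  proof -
    have "ennreal (\<beta> / (\<beta> - 1) * Y 0 x) = ennreal (\<beta> / (\<beta> - 1)) * ennreal (Y 0 x)" for x
      using \<beta> Y_nonneg[of 0 x] by (intro ennreal_mult) auto
    then show ?thesis by (simp add: nn_integral_cmult mult.assoc)
  qed
  also have "\<dots> < \<infinity>"
    using integrableD(2)[OF integrable_Y] by (simp add: ennreal_mult_less_top less_top)
  finally show ?thesis .
qed

lemma AE_LIMSEQ_centered_trunc_sum_geom_index: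
  assumes \<beta>: "1 < \<beta>"
  shows "AE x in M. (\<lambda>n. centered_trunc_sum (geom_index \<beta> n) x / real (geom_index \<beta> n)) \<longlonglongrightarrow> 0"
proof -
  let ?k = "geom_index \<beta>"
  let ?D = "\<lambda>n x. \<bar>centered_trunc_sum (?k n) x / real (?k n)\<bar>"
  have k: "0 < real (?k n)" for n using geom_index_ge_1[OF \<beta>, of n] by simp
  have "AE x in M. \<forall>\<^sub>F n in sequentially. ?D n x < 1 / Suc j" for j
  proof -
    have "AE x in M. \<forall>\<^sub>F n in sequentially.
        x \<notin> {x \<in> space M. 1 / Suc j * real (?k n) \<le> \<bar>centered_trunc_sum (?k n) x\<bar>}"
      by (intro AE_eventually_notin_if_suminf_finite
          suminf_emeasure_centered_trunc_sum_geom_index_finite \<beta>) auto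
    with k show ?thesis
      by (elim AE_mp)
        (auto intro!: AE_I2 elim!: eventually_mono simp: abs_divide pos_divide_less_eq mult.commute)
  qed
  then have "AE x in M. \<forall>j. \<forall>\<^sub>F n in sequentially. ?D n x < 1 / Suc j"
    by (simp add: AE_all_countable)
  then show ?thesis
  proof (rule AE_mp, intro AE_I2 impI tendstoI)
    fix x and r :: real
    assume small: "\<forall>j. \<forall>\<^sub>F n in sequentially. ?D n x < 1 / Suc j" and "0 < r"
    then obtain j where "1 / real (Suc j) < r"
      using reals_Archimedean by (auto simp: inverse_eq_divide)
    with small[rule_format, of j]
    show "\<forall>\<^sub>F n in sequentially. dist (centered_trunc_sum (?k n) x / real (?k n)) 0 < r"
      by (auto elim!: eventually_mono)
  qed
qed

lemma AE_LIMSEQ_mean_geom_index: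
  assumes \<beta>: "1 < \<beta>"
  shows "AE x in M. (\<lambda>n. (\<Sum>i<geom_index \<beta> n. Y i x) / real (geom_index \<beta> n)) \<longlonglongrightarrow> expectation (Y 0)"
  using AE_LIMSEQ_centered_trunc_sum_geom_index[OF \<beta>] AE_eventually_Y_eq_truncY
proof eventually_elim
  case (elim x)
  let ?k = "geom_index \<beta>"
  have "(\<lambda>i. Y i x - truncY i x) \<longlonglongrightarrow> 0"
    using elim(2) by (intro tendsto_eventually) (auto elim: eventually_mono)
  from filterlim_compose[OF LIMSEQ_Cesaro_mean[OF this] filterlim_geom_index[OF \<beta>]]
  have "(\<lambda>n. (\<Sum>i<?k n. Y i x - truncY i x) / real (?k n)) \<longlonglongrightarrow> 0" by simp
  moreover have "(\<lambda>n. (\<Sum>i<?k n. expectation (truncY i)) / real (?k n)) \<longlonglongrightarrow> expectation (Y 0)"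
    using filterlim_compose[OF LIMSEQ_Cesaro_mean[OF LIMSEQ_expectation_truncY]
        filterlim_geom_index[OF \<beta>]]
    by simp
  ultimately have "(\<lambda>n. centered_trunc_sum (?k n) x / real (?k n)
      + (\<Sum>i<?k n. expectation (truncY i)) / real (?k n)
      + (\<Sum>i<?k n. Y i x - truncY i x) / real (?k n)) \<longlonglongrightarrow> 0 + expectation (Y 0) + 0"
    using elim(1) by (intro tendsto_add)
  then show ?case
    by (simp add: centered_trunc_sum_def add_divide_distrib[symmetric] sum_subtractf)
qed

theorem strong_law_of_large_numbers:
  "AE x in M. (\<lambda>n. (\<Sum>i<n. Y i x) / real n) \<longlonglongrightarrow> expectation (Y 0)"
proof -
  have "AE x in M. \<forall>j. (\<lambda>n. (\<Sum>i<geom_index (1 + 1 / Suc j) n. Y i x)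
      / real (geom_index (1 + 1 / Suc j) n)) \<longlonglongrightarrow> expectation (Y 0)"
    unfolding AE_all_countable by (intro allI AE_LIMSEQ_mean_geom_index) simp
  then show ?thesis
    by (rule AE_mp) (auto intro!: AE_I2 LIMSEQ_mean_if_geom_subsequences Y_nonneg)
qed

end

lemma (in prob_space) indep_var_if_indep_vars:
  assumes ind: "indep_vars (\<lambda>_. borel) X I" and "a \<in> I" "b \<in> I" "a \<noteq> b"
  shows "indep_var borel (X a) borel (X b)"
proof -
  have "indep_var (PiM {a} (\<lambda>_. borel)) (\<lambda>\<omega>. restrict (\<lambda>i. X i \<omega>) {a})
      (PiM {b} (\<lambda>_. borel)) (\<lambda>\<omega>. restrict (\<lambda>i. X i \<omega>) {b})"
    by (rule indep_var_restrict[OF ind]) (use assms in auto)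
  then have "indep_var borel ((\<lambda>f. f a) \<circ> (\<lambda>\<omega>. restrict (\<lambda>i. X i \<omega>) {a}))
      borel ((\<lambda>f. f b) \<circ> (\<lambda>\<omega>. restrict (\<lambda>i. X i \<omega>) {b}))"
    by (rule indep_var_compose) (auto intro: measurable_component_singleton)
  then show ?thesis by (simp add: comp_def)
qed

lemma (in prob_space) AE_LIMSEQ_empirical_mean:
  fixes X :: "nat \<Rightarrow> 'a \<Rightarrow> real" and g :: "real \<Rightarrow> real"
  assumes X: "\<And>s. 1 \<le> s \<Longrightarrow> X s \<in> borel_measurable M"
    and indep: "indep_vars (\<lambda>_. borel) X {1..}"
    and distr: "\<And>s. 1 \<le> s \<Longrightarrow> distr M borel (X s) = distr M borel (X 1)"
    and g[measurable]: "g \<in> borel_measurable borel" and "\<And>y. 0 \<le> g y"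
    and "integrable M (\<lambda>\<omega>. g (X 1 \<omega>))"
  shows "AE \<omega> in M. (\<lambda>t. 1 / real t * (\<Sum>s\<in>{1..t}. g (X s \<omega>))) \<longlonglongrightarrow> expectation (\<lambda>\<omega>. g (X 1 \<omega>))"
proof -
  have [measurable]: "X (Suc s) \<in> borel_measurable M" for s using X[of "Suc s"] by simp
  interpret pairwise_iid_nonneg M "\<lambda>s \<omega>. g (X (Suc s) \<omega>)"
  proof
    show "indep_var borel (\<lambda>\<omega>. g (X (Suc i) \<omega>)) borel (\<lambda>\<omega>. g (X (Suc j) \<omega>))" if "i \<noteq> j" for i j
      using indep_var_compose[OF indep_var_if_indep_vars[OF indep, of "Suc i" "Suc j"] g g] that
      by (simp add: comp_def)
    show "distr M borel (\<lambda>\<omega>. g (X (Suc i) \<omega>)) = distr M borel (\<lambda>\<omega>. g (X (Suc 0) \<omega>))" for i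
    proof -
      have "distr M borel (\<lambda>\<omega>. g (X (Suc i) \<omega>)) = distr (distr M borel (X (Suc i))) borel g"
        by (subst distr_distr) (auto simp: comp_def)
      also have "\<dots> = distr (distr M borel (X (Suc 0))) borel g"
        using distr[of "Suc i"] by simp
      also have "\<dots> = distr M borel (\<lambda>\<omega>. g (X (Suc 0) \<omega>))"
        by (subst distr_distr) (auto simp: comp_def)
      finally show ?thesis .
    qed
  qed (use assms in simp_all)
  from strong_law_of_large_numbers show ?thesis
    by (rule AE_mp) (auto intro!: AE_I2 simp: sum.atLeast1_atMost_eq)
qed

section \<open>The Glivenko--Cantelli theorem\<close>

definition empirical_measure :: "(nat \<Rightarrow> real) \<Rightarrow> nat \<Rightarrow> real measure" where
  "empirical_measure x t = distr (measure_pmf (pmf_of_set {1..t})) borel x"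

lemma real_distribution_empirical_measure: "1 \<le> t \<Longrightarrow> real_distribution (empirical_measure x t)"
  unfolding empirical_measure_def
  by (intro prob_space.real_distribution_distr measure_pmf.prob_space_axioms) simp

lemma integral_empirical_measure:
  assumes "1 \<le> t" "f \<in> borel_measurable borel"
  shows "integral\<^sup>L (empirical_measure x t) f = 1 / real t * (\<Sum>s\<in>{1..t}. f (x s))"
  using assms unfolding empirical_measure_def by (simp add: integral_distr integral_pmf_of_set)

lemma cdf_empirical_measure:
  assumes "1 \<le> t"
  shows "cdf (empirical_measure x t) = empirical_cdf x t"
proof
  fix y
  interpret real_distribution "empirical_measure x t"
    by (rule real_distribution_empirical_measure[OF assms])
  show "cdf (empirical_measure x t) y = empirical_cdf x t y"
    using integral_empirical_measure[OF assms, of "indicator {..y}" x]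
    unfolding cdf_def empirical_cdf_def by (simp add: indicator_def of_bool_def)
qed

lemma interval_measure_empirical_cdf:
  assumes "1 \<le> t"
  shows "interval_measure (empirical_cdf x t) = empirical_measure x t"
proof -
  have "distribution_function (empirical_cdf x t)"
    using distribution_function_cdf[OF real_distribution_empirical_measure[OF assms]]
    by (simp add: cdf_empirical_measure[OF assms])
  then show ?thesis
    using real_distribution_empirical_measure[OF assms]
    by (intro cdf_unique real_distribution_interval_measure_df)
      (simp_all add: cdf_interval_measure_df cdf_empirical_measure[OF assms])
qed

lemma LS_neg_int_empirical_cdf:
  assumes "1 \<le> t"
  shows "LS_neg_int (empirical_cdf x t) = 1 / real t * (\<Sum>s\<in>{1..t}. indicator {..0} (x s) * x s)"
  unfolding LS_neg_int_def set_lebesgue_integral_def interval_measure_empirical_cdf[OF assms]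
  by (simp add: integral_empirical_measure[OF assms])

lemma empirical_cdf_mono: "y \<le> z \<Longrightarrow> empirical_cdf x t y \<le> empirical_cdf x t z"
  unfolding empirical_cdf_def by (intro mult_left_mono sum_mono) auto

lemma empirical_cdf_nonneg: "0 \<le> empirical_cdf x t y"
  unfolding empirical_cdf_def by (intro mult_nonneg_nonneg sum_nonneg) auto

lemma empirical_cdf_le_1: "empirical_cdf x t y \<le> 1"
proof -
  have "(\<Sum>s\<in>{1..t}. if x s \<le> y then 1 else 0) \<le> (\<Sum>s\<in>{1..t}. 1 :: real)"
    by (intro sum_mono) auto
  then show ?thesis unfolding empirical_cdf_def by (cases "t = 0") (auto simp: divide_le_eq)
qed

definition quantile_grid :: "(real \<Rightarrow> real) \<Rightarrow> nat \<Rightarrow> nat \<Rightarrow> real" where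
  "quantile_grid F m j = VaR (real j / real m) F"

(* Fl and Gl play the roles of the left limits y \<mapsto> F(y-) and y \<mapsto> G(y-). *)
context
  fixes F Fl G Gl :: "real \<Rightarrow> real" and m :: nat
  assumes F: "distribution_function F" and m: "2 \<le> m"
    and F_Fl: "\<And>z y. z < y \<Longrightarrow> F z \<le> Fl y"
    and Fl_grid: "\<And>j. 0 < j \<Longrightarrow> j < m \<Longrightarrow> Fl (quantile_grid F m j) \<le> real j / real m"
    and G_Gl: "\<And>z y. z < y \<Longrightarrow> G z \<le> Gl y"
    and G: "mono G" "\<And>y. 0 \<le> G y" "\<And>y. G y \<le> 1"
    and close: "\<And>j. 0 < j \<Longrightarrow> j < m \<Longrightarrow> \<bar>G (quantile_grid F m j) - F (quantile_grid F m j)\<bar> < 1 / m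
      \<and> \<bar>Gl (quantile_grid F m j) - Fl (quantile_grid F m j)\<bar> < 1 / m"
begin

lemma grid_lower_bound:
  assumes "j = 0 \<or> (0 < j \<and> j < m \<and> quantile_grid F m j \<le> y)"
  shows "real j / m \<le> F y \<and> (real j - 1) / m \<le> G y"
  using assms
proof (elim disjE conjE)
  assume "j = 0"
  have "(real j - 1) / m = - (1 / m)" "0 \<le> 1 / real m" using \<open>j = 0\<close> by simp_all
  then have "(real j - 1) / m \<le> G y" using G(2)[of y] by linarith
  then show ?thesis using \<open>j = 0\<close> distribution_function_nonneg[OF F, of y] by simp
next
  assume j: "0 < j" "j < m" and q: "quantile_grid F m j \<le> y"
  have "real j / m \<le> F (quantile_grid F m j)"
    unfolding quantile_grid_def using j by (intro le_df_at_VaR[OF F]) (simp_all add: divide_less_eq)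
  moreover have "F (quantile_grid F m j) - 1 / m < G (quantile_grid F m j)"
    using close[OF j] by (simp add: abs_less_iff)
  moreover have "(real j - 1) / m = real j / m - 1 / m" by (simp add: diff_divide_distrib)
  ultimately show ?thesis
    using distribution_function_mono[OF F q] monoD[OF G(1) q] by linarith
qed

lemma grid_upper_bound:
  assumes "Suc j = m \<or> (Suc j < m \<and> y < quantile_grid F m (Suc j))"
  shows "F y \<le> (real j + 1) / m \<and> G y \<le> (real j + 2) / m"
  using assms
proof (elim disjE conjE)
  assume "Suc j = m"
  then have "(real j + 1) / m = 1" "1 \<le> (real j + 2) / m" by auto
  then show ?thesis using distribution_function_le_1[OF F, of y] G(3)[of y] by linarith
next
  assume "Suc j < m" and y: "y < quantile_grid F m (Suc j)"
  have "Gl (quantile_grid F m (Suc j)) < Fl (quantile_grid F m (Suc j)) + 1 / m"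
    using close[OF _ \<open>Suc j < m\<close>] by (simp add: abs_less_iff)
  then show ?thesis
    using F_Fl[OF y] G_Gl[OF y] Fl_grid[OF _ \<open>Suc j < m\<close>]
      by (simp add: add_divide_distrib add.commute)
qed

lemma abs_diff_le_grid: "\<bar>G y - F y\<bar> \<le> 2 / m"
proof -
  define J where "J = {j \<in> {0..<m}. j = 0 \<or> quantile_grid F m j \<le> y}"
  define j0 where "j0 = Max J"
  have "finite J" "0 \<in> J" using m by (auto simp: J_def)
  then have "j0 \<in> J" unfolding j0_def by (intro Max_in) auto
  have "Suc j0 \<notin> J"
  proof
    assume "Suc j0 \<in> J"
    then have "Suc j0 \<le> j0" unfolding j0_def by (rule Max_ge[OF \<open>finite J\<close>])
    then show False by simp
  qed
  from \<open>j0 \<in> J\<close> have "j0 = 0 \<or> (0 < j0 \<and> j0 < m \<and> quantile_grid F m j0 \<le> y)"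
    unfolding J_def by auto
  moreover from \<open>j0 \<in> J\<close> \<open>Suc j0 \<notin> J\<close>
  have "Suc j0 = m \<or> (Suc j0 < m \<and> y < quantile_grid F m (Suc j0))"
    unfolding J_def by auto
  ultimately have "real j0 / m \<le> F y" "(real j0 - 1) / m \<le> G y"
    "F y \<le> (real j0 + 1) / m" "G y \<le> (real j0 + 2) / m"
    using grid_lower_bound grid_upper_bound by auto
  moreover have "(real j0 + 2) / m - real j0 / m = 2 / m"
    "(real j0 + 1) / m - (real j0 - 1) / m = 2 / m"
    by (simp_all add: diff_divide_distrib[symmetric])
  ultimately show ?thesis by (simp add: abs_le_iff)
qed

end

lemma LIMSEQ_sup_norm_if_grid:
  fixes F Fl :: "real \<Rightarrow> real" and G Gl :: "nat \<Rightarrow> real \<Rightarrow> real"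
  assumes F: "distribution_function F"
    and F_Fl: "\<And>z y. z < y \<Longrightarrow> F z \<le> Fl y"
    and Fl_VaR: "\<And>p. 0 < p \<Longrightarrow> p < 1 \<Longrightarrow> Fl (VaR p F) \<le> p"
    and G_Gl: "\<And>t z y. z < y \<Longrightarrow> G t z \<le> Gl t y"
    and G: "\<And>t. mono (G t)" "\<And>t y. 0 \<le> G t y" "\<And>t y. G t y \<le> 1"
    and lim: "\<And>m j. 0 < j \<Longrightarrow> j < m \<Longrightarrow> (\<lambda>t. G t (quantile_grid F m j)) \<longlonglongrightarrow> F (quantile_grid F m j)"
      "\<And>m j. 0 < j \<Longrightarrow> j < m \<Longrightarrow> (\<lambda>t. Gl t (quantile_grid F m j)) \<longlonglongrightarrow> Fl (quantile_grid F m j)"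
  shows "(\<lambda>t. sup_norm (\<lambda>y. G t y - F y)) \<longlonglongrightarrow> 0"
proof (rule tendstoI)
  fix r :: real assume "0 < r"
  define m :: nat where "m = nat \<lceil>2 / r\<rceil> + 2"
  have "2 \<le> m" "0 < real m" by (simp_all add: m_def)
  have "2 / r < m" unfolding m_def by linarith
  then have "2 / m < r" using \<open>0 < r\<close> \<open>0 < real m\<close> by (simp add: field_simps)
  have "\<forall>\<^sub>F t in sequentially. \<forall>j\<in>{0<..<m}.
      \<bar>G t (quantile_grid F m j) - F (quantile_grid F m j)\<bar> < 1 / m
      \<and> \<bar>Gl t (quantile_grid F m j) - Fl (quantile_grid F m j)\<bar> < 1 / m"
  proof (intro eventually_ball_finite ballI eventually_conj)
    fix j assume "j \<in> {0<..<m}"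
    then have j: "0 < j" "j < m" by auto
    show "\<forall>\<^sub>F t in sequentially. \<bar>G t (quantile_grid F m j) - F (quantile_grid F m j)\<bar> < 1 / m"
      using tendstoD[OF lim(1)[OF j], of "1 / m"] \<open>0 < real m\<close> by (simp add: dist_real_def)
    show "\<forall>\<^sub>F t in sequentially. \<bar>Gl t (quantile_grid F m j) - Fl (quantile_grid F m j)\<bar> < 1 / m"
      using tendstoD[OF lim(2)[OF j], of "1 / m"] \<open>0 < real m\<close> by (simp add: dist_real_def)
  qed simp
  then show "\<forall>\<^sub>F t in sequentially. dist (sup_norm (\<lambda>y. G t y - F y)) 0 < r"
  proof eventually_elim
    case (elim t)
    have "\<bar>G t y - F y\<bar> \<le> 2 / m" for y
    proof (rule abs_diff_le_grid[OF F \<open>2 \<le> m\<close> F_Fl _ G_Gl G])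
      fix j :: nat assume "0 < j" "j < m"
      then show "Fl (quantile_grid F m j) \<le> real j / real m"
        unfolding quantile_grid_def using \<open>0 < real m\<close> by (intro Fl_VaR) auto
      show "\<bar>G t (quantile_grid F m j) - F (quantile_grid F m j)\<bar> < 1 / m
        \<and> \<bar>Gl t (quantile_grid F m j) - Fl (quantile_grid F m j)\<bar> < 1 / m"
        using elim \<open>0 < j\<close> \<open>j < m\<close> by simp
    qed
    then have "sup_norm (\<lambda>y. G t y - F y) \<le> 2 / m" by (rule sup_norm_le)
    moreover have "\<bar>G t 0 - F 0\<bar> \<le> sup_norm (\<lambda>y. G t y - F y)"
      using G distribution_function_nonneg[OF F] distribution_function_le_1[OF F]
      by (intro abs_le_sup_norm bdd_above_abs_diff_unit_valued) blast+
    ultimately show ?case using \<open>2 / m < r\<close> abs_ge_zero[of "G t 0 - F 0"] by simp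
  qed
qed

lemma (in prob_space) distr_eq_interval_measure_if_cdf_eq:
  assumes "X \<in> borel_measurable M" "cdf (distr M borel X) = F"
  shows "distribution_function F" "distr M borel X = interval_measure F"
proof -
  have rd: "real_distribution (distr M borel X)" using assms(1)
    by (intro real_distribution_distr) simp
  show F: "distribution_function F" using distribution_function_cdf[OF rd] assms(2) by simp
  show "distr M borel X = interval_measure F"
    by (rule cdf_unique[OF rd real_distribution_interval_measure_df[OF F]])
      (simp add: assms(2) cdf_interval_measure_df[OF F])
qed

lemma (in prob_space) AE_LIMSEQ_empirical_frequency:
  fixes X :: "nat \<Rightarrow> 'a \<Rightarrow> real"
  assumes X: "\<And>s. 1 \<le> s \<Longrightarrow> X s \<in> borel_measurable M"
    and indep: "indep_vars (\<lambda>_. borel) X {1..}"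
    and cdf_X: "\<And>s. 1 \<le> s \<Longrightarrow> cdf (distr M borel (X s)) = F"
    and A: "A \<in> sets borel"
  shows "AE \<omega> in M. (\<lambda>t. 1 / real t * (\<Sum>s\<in>{1..t}. indicator A (X s \<omega>)))
    \<longlonglongrightarrow> measure (interval_measure F) A"
proof -
  have distr_X: "\<And>s. 1 \<le> s \<Longrightarrow> distr M borel (X s) = interval_measure F"
    using distr_eq_interval_measure_if_cdf_eq(2)[OF X cdf_X] by blast
  have "integrable M (\<lambda>\<omega>. indicator A (X 1 \<omega>) :: real)"
    using X[of 1] A by (intro integrable_const_bound[where B=1]) auto
  moreover have mean: "expectation (\<lambda>\<omega>. indicator A (X 1 \<omega>)) = measure (interval_measure F) A"
    using integral_distr[of "X 1" M borel "indicator A :: real \<Rightarrow> real"] distr_X[of 1] X[of 1] A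
      by simp
  ultimately show ?thesis
    using AE_LIMSEQ_empirical_mean[OF X indep _ _ _ \<open>integrable M _\<close>] distr_X A unfolding mean
      by simp
qed

lemma measure_interval_measure_lessThan_ge:
  assumes F: "distribution_function F" and "z < y"
  shows "F z \<le> measure (interval_measure F) {..<y}"
proof -
  interpret real_distribution "interval_measure F"
    by (rule real_distribution_interval_measure_df[OF F])
  have "F z = measure (interval_measure F) {..z}"
    using cdf_interval_measure_df[OF F] unfolding cdf_def by metis
  also have "\<dots> \<le> measure (interval_measure F) {..<y}"
    using \<open>z < y\<close> by (intro finite_measure_mono) auto
  finally show ?thesis .
qed

lemma measure_interval_measure_lessThan_VaR_le:
  assumes F: "distribution_function F" and p: "0 < p" "p < 1"
  shows "measure (interval_measure F) {..<VaR p F} \<le> p"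
proof (rule tendsto_upperbound)
  interpret real_distribution "interval_measure F"
    by (rule real_distribution_interval_measure_df[OF F])
  show "(F \<longlongrightarrow> measure (interval_measure F) {..<VaR p F}) (at_left (VaR p F))"
    using cdf_at_left unfolding cdf_interval_measure_df[OF F] .
  show "\<forall>\<^sub>F z in at_left (VaR p F). F z \<le> p"
    using df_less_if_less_VaR[OF F p]
      by (intro eventually_at_leftI[of "VaR p F - 1"]) (auto intro: less_imp_le)
qed simp

theorem (in prob_space) Glivenko_Cantelli:
  fixes X :: "nat \<Rightarrow> 'a \<Rightarrow> real"
  assumes X: "\<And>s. 1 \<le> s \<Longrightarrow> X s \<in> borel_measurable M"
    and indep: "indep_vars (\<lambda>_. borel) X {1..}"
    and cdf_X: "\<And>s. 1 \<le> s \<Longrightarrow> cdf (distr M borel (X s)) = F"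
  shows "AE \<omega> in M. (\<lambda>t. sup_norm (\<lambda>y. empirical_cdf (\<lambda>s. X s \<omega>) t y - F y)) \<longlonglongrightarrow> 0"
proof -
  have F: "distribution_function F" using distr_eq_interval_measure_if_cdf_eq(1)[OF X cdf_X]
    by blast
  let ?Fl = "\<lambda>y. measure (interval_measure F) {..<y}"
  let ?freq = "\<lambda>A \<omega> t. 1 / real t * (\<Sum>s\<in>{1..t}. indicator A (X s \<omega>))"
  have F_eq: "measure (interval_measure F) {..y} = F y" for y
    using cdf_interval_measure_df[OF F] unfolding cdf_def by metis
  have "AE \<omega> in M. \<forall>m j. ?freq {..quantile_grid F m j} \<omega> \<longlonglongrightarrow> F (quantile_grid F m j)
      \<and> ?freq {..<quantile_grid F m j} \<omega> \<longlonglongrightarrow> ?Fl (quantile_grid F m j)"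
    unfolding AE_all_countable
  proof (intro allI AE_conjI)
    fix m j
    show "AE \<omega> in M. ?freq {..quantile_grid F m j} \<omega> \<longlonglongrightarrow> F (quantile_grid F m j)"
      using AE_LIMSEQ_empirical_frequency[OF X indep cdf_X, of "{..quantile_grid F m j}"]
        by (simp add: F_eq)
    show "AE \<omega> in M. ?freq {..<quantile_grid F m j} \<omega> \<longlonglongrightarrow> ?Fl (quantile_grid F m j)"
      using AE_LIMSEQ_empirical_frequency[OF X indep cdf_X, of "{..<quantile_grid F m j}"] by simp
  qed
  then show ?thesis
  proof eventually_elim
    case (elim \<omega>)
    have empirical_cdf_eq: "empirical_cdf (\<lambda>s. X s \<omega>) t y = ?freq {..y} \<omega> t" for t y
      unfolding empirical_cdf_def by (simp add: indicator_def of_bool_def)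
    show ?case
    proof (rule LIMSEQ_sup_norm_if_grid[OF F measure_interval_measure_lessThan_ge[OF F]
          measure_interval_measure_lessThan_VaR_le[OF F], where Gl="\<lambda>t y. ?freq {..<y} \<omega> t"])
      show "empirical_cdf (\<lambda>s. X s \<omega>) t z \<le> ?freq {..<y} \<omega> t" if "z < y" for t z y
        unfolding empirical_cdf_eq using that
          by (intro mult_left_mono sum_mono) (auto simp: indicator_def)
      show "mono (empirical_cdf (\<lambda>s. X s \<omega>) t)" for t
        by (intro monoI empirical_cdf_mono)
      show "0 \<le> empirical_cdf (\<lambda>s. X s \<omega>) t y" "empirical_cdf (\<lambda>s. X s \<omega>) t y \<le> 1" for t y
        by (rule empirical_cdf_nonneg empirical_cdf_le_1)+
      show "(\<lambda>t. empirical_cdf (\<lambda>s. X s \<omega>) t (quantile_grid F m j)) \<longlonglongrightarrow> F (quantile_grid F m j)"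
        "(\<lambda>t. ?freq {..<quantile_grid F m j} \<omega> t) \<longlonglongrightarrow> ?Fl (quantile_grid F m j)" for m j
        using elim unfolding empirical_cdf_eq by auto
    qed
  qed
qed

section \<open>Stability of CVaR\<close>

lemma (in prob_space) AE_LIMSEQ_LS_neg_int_empirical_cdf:
  fixes X :: "nat \<Rightarrow> 'a \<Rightarrow> real"
  assumes X: "\<And>s. 1 \<le> s \<Longrightarrow> X s \<in> borel_measurable M"
    and indep: "indep_vars (\<lambda>_. borel) X {1..}"
    and cdf_X: "\<And>s. 1 \<le> s \<Longrightarrow> cdf (distr M borel (X s)) = F"
    and fin: "LS_neg_finite F"
  shows "AE \<omega> in M. (\<lambda>t. LS_neg_int (empirical_cdf (\<lambda>s. X s \<omega>) t)) \<longlonglongrightarrow> LS_neg_int F"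
proof -
  have F: "distribution_function F"
    and distr_X: "\<And>s. 1 \<le> s \<Longrightarrow> distr M borel (X s) = interval_measure F"
    using distr_eq_interval_measure_if_cdf_eq[OF X cdf_X] by auto
  define g :: "real \<Rightarrow> real" where "g = (\<lambda>z. - (indicator {..0} z * z))"
  have g_measurable[measurable]: "g \<in> borel_measurable borel" unfolding g_def by measurable
  have "0 \<le> g z" for z by (simp add: g_def indicator_def)
  have "integrable (interval_measure F) (\<lambda>z. indicator {..0} z * z)"
    using fin unfolding LS_neg_finite_def set_integrable_def by simp
  then have "integrable (distr M borel (X 1)) g"
    using distr_X[of 1] by (simp add: g_def)
  then have "integrable M (\<lambda>\<omega>. g (X 1 \<omega>))"
    using X[of 1] by (simp add: integrable_distr_eq)
  moreover have "expectation (\<lambda>\<omega>. g (X 1 \<omega>)) = - LS_neg_int F"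
    using integral_distr[of "X 1" M borel g] distr_X[of 1] X[of 1]
    by (simp add: LS_neg_int_def set_lebesgue_integral_def g_def)
  ultimately have "AE \<omega> in M. (\<lambda>t. 1 / real t * (\<Sum>s\<in>{1..t}. g (X s \<omega>))) \<longlonglongrightarrow> - LS_neg_int F"
    using AE_LIMSEQ_empirical_mean[OF X indep _ g_measurable \<open>\<And>z. 0 \<le> g z\<close>] distr_X by simp
  then show ?thesis
  proof eventually_elim
    case (elim \<omega>)
    have "\<forall>\<^sub>F t in sequentially.
        - (1 / real t * (\<Sum>s\<in>{1..t}. g (X s \<omega>))) = LS_neg_int (empirical_cdf (\<lambda>s. X s \<omega>) t)"
      by (intro eventually_sequentiallyI[of 1]) (simp add: LS_neg_int_empirical_cdf g_def sum_negf)
    with tendsto_minus[OF elim] show ?case by (simp add: tendsto_cong)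
  qed
qed

lemma (in prob_space) AE_LIMSEQ_cvar_norm_dist_empirical_cdf:
  fixes X :: "nat \<Rightarrow> 'a \<Rightarrow> real"
  assumes X: "\<And>s. 1 \<le> s \<Longrightarrow> X s \<in> borel_measurable M"
    and indep: "indep_vars (\<lambda>_. borel) X {1..}"
    and cdf_X: "\<And>s. 1 \<le> s \<Longrightarrow> cdf (distr M borel (X s)) = F"
    and fin: "LS_neg_finite F"
  shows "AE \<omega> in M. (\<lambda>t. cvar_norm_dist (empirical_cdf (\<lambda>s. X s \<omega>) t) F) \<longlonglongrightarrow> 0"
proof -
  have "AE \<omega> in M. (\<lambda>t. sup_norm (\<lambda>y. empirical_cdf (\<lambda>s. X s \<omega>) t y - F y)) \<longlonglongrightarrow> 0"
    by (rule Glivenko_Cantelli[OF X indep cdf_X])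
  moreover have "AE \<omega> in M. (\<lambda>t. LS_neg_int (empirical_cdf (\<lambda>s. X s \<omega>) t)) \<longlonglongrightarrow> LS_neg_int F"
    by (rule AE_LIMSEQ_LS_neg_int_empirical_cdf[OF X indep cdf_X fin])
  ultimately show ?thesis
  proof eventually_elim
    case (elim \<omega>)
    have "(\<lambda>t. cvar_norm_dist (empirical_cdf (\<lambda>s. X s \<omega>) t) F)
        \<longlonglongrightarrow> max 0 \<bar>LS_neg_int F - LS_neg_int F\<bar>"
      unfolding cvar_norm_dist_def by (intro tendsto_intros elim)
    then show ?case by simp
  qed
qed

theorem proposition24:
  fixes M :: "'a measure" and K :: nat and \<alpha> :: real
    and X :: "nat \<Rightarrow> nat \<Rightarrow> 'a \<Rightarrow> real"
    and F :: "nat \<Rightarrow> real \<Rightarrow> real"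
  assumes "prob_space M"
    and "K \<ge> 1"
    and rv: "\<And>i s. i \<in> {1..K} \<Longrightarrow> s \<ge> 1 \<Longrightarrow> X i s \<in> borel_measurable M"
    and indep: "\<And>i. i \<in> {1..K} \<Longrightarrow> prob_space.indep_vars M (\<lambda>_. borel) (X i) {1..}"
    and distr: "\<And>i s. i \<in> {1..K} \<Longrightarrow> s \<ge> 1 \<Longrightarrow> cdf (distr M borel (X i s)) = F i"
    and "0 < \<alpha>" and "\<alpha> < 1"
    and finite_cvar: "\<And>i. i \<in> {1..K} \<Longrightarrow> \<bar>CVaR \<alpha> (F i)\<bar> < \<infinity>"
  shows "(\<forall>G0\<in>mixtures K F. \<forall>\<epsilon>>0. \<exists>\<delta>>0. \<forall>G.
            distribution_function G \<and> LS_neg_finite G \<and> cvar_norm_dist G G0 < \<delta>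
              \<longrightarrow> \<bar>CVaR \<alpha> G - CVaR \<alpha> G0\<bar> < ereal \<epsilon>)
       \<and> (\<forall>i\<in>{1..K}. AE \<omega> in M.
            (\<lambda>t. cvar_norm_dist (empirical_cdf (\<lambda>s. X i s \<omega>) t) (F i)) \<longlonglongrightarrow> 0)"
proof -
  interpret prob_space M by fact
  have F: "distribution_function (F i)" if "i \<in> {1..K}" for i
    using distr_eq_interval_measure_if_cdf_eq(1)[OF rv distr] that by blast
  have fin: "LS_neg_finite (F i)" if "i \<in> {1..K}" for i
    using LS_neg_finite_if_CVaR_finite[OF F \<open>0 < \<alpha>\<close> finite_cvar] that by blast
  show ?thesis
  proof (intro conjI ballI allI impI)
    fix G0 and \<epsilon> :: real assume "G0 \<in> mixtures K F" "0 < \<epsilon>"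
    then obtain p where p: "\<And>i. i \<in> {1..K} \<Longrightarrow> 0 \<le> p i" "(\<Sum>i\<in>{1..K}. p i) = 1"
      and G0: "G0 = (\<lambda>x. \<Sum>i\<in>{1..K}. p i * F i x)"
      unfolding mixtures_def by blast
    show "\<exists>\<delta>>0. \<forall>G. distribution_function G \<and> LS_neg_finite G \<and> cvar_norm_dist G G0 < \<delta>
        \<longrightarrow> \<bar>CVaR \<alpha> G - CVaR \<alpha> G0\<bar> < ereal \<epsilon>"
      unfolding G0 using \<open>0 < \<alpha>\<close> \<open>\<alpha> < 1\<close> \<open>0 < \<epsilon>\<close>
      by (intro CVaR_continuous distribution_function_mixture[OF F p]
          LS_neg_finite_mixture[OF F fin p])
  next
    fix i assume "i \<in> {1..K}"
    then show "AE \<omega> in M. (\<lambda>t. cvar_norm_dist (empirical_cdf (\<lambda>s. X i s \<omega>) t) (F i)) \<longlonglongrightarrow> 0"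
      by (intro AE_LIMSEQ_cvar_norm_dist_empirical_cdf rv indep distr fin)
  qed
qed

end
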